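(* Let $\Gamma$ be a finitely generated group, let $G$ be a finite group with subgroups $G_1, G_2$, and let $\varphi \colon \Gamma \to G$ be a surjective homomorphism. Suppose that the profinite completions of $\varphi^{-1}(G_1)$ and $\varphi^{-1}(G_2)$ are not isomorphic. Then there exist a finite group $H$, a homomorphism $\psi \colon \Gamma \to H$ and a homomorphism $\theta \colon H \to G$ with $\varphi = \theta \circ \psi$, such that $\theta^{-1}(G_1)$ and $\theta^{-1}(G_2)$ are not isomorphic. *)

theory Defs
  imports "HOL-Analysis.Analysis" "HOL-Algebra.Algebra"
begin

definition fin_index_normals :: "('a, 'm) monoid_scheme \<Rightarrow> 'a set set" where
  "fin_index_normals K = {N. N \<lhd> K \<and> finite (carrier (K Mod N))}"

text \<open>Profinite completion as the inverse limit of the finite quotients K/N,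
  realised as compatible families (x_N) of cosets, extensional outside the index set.\<close>
definition profinite_completion :: "('a, 'm) monoid_scheme \<Rightarrow> ('a set \<Rightarrow> 'a set) monoid" where
  "profinite_completion K =
    \<lparr> carrier = {x. x \<in> (\<Pi>\<^sub>E N\<in>fin_index_normals K. carrier (K Mod N)) \<and>
                    (\<forall>N\<in>fin_index_normals K. \<forall>M\<in>fin_index_normals K. M \<subseteq> N \<longrightarrow> x M \<subseteq> x N)},
      mult = (\<lambda>x y. \<lambda>N\<in>fin_index_normals K. x N <#>\<^bsub>K\<^esub> y N),
      one = (\<lambda>N\<in>fin_index_normals K. N) \<rparr>"

definition profinite_topology :: "('a, 'm) monoid_scheme \<Rightarrow> ('a set \<Rightarrow> 'a set) topology" where
  "profinite_topology K =
     subtopology (product_topology (\<lambda>N. discrete_topology (carrier (K Mod N))) (fin_index_normals K))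
                 (carrier (profinite_completion K))"

definition profinite_completions_iso :: "('a, 'm) monoid_scheme \<Rightarrow> ('b, 'n) monoid_scheme \<Rightarrow> bool" where
  "profinite_completions_iso K L \<longleftrightarrow>
     (\<exists>f. f \<in> iso (profinite_completion K) (profinite_completion L) \<and>
          homeomorphic_map (profinite_topology K) (profinite_topology L) f)"

definition finitely_generated_group :: "('a, 'm) monoid_scheme \<Rightarrow> bool" where
  "finitely_generated_group K \<longleftrightarrow> (\<exists>S. finite S \<and> S \<subseteq> carrier K \<and> generate K S = carrier K)"

end

theory Submission
  imports Defs
begin

text \<open>Let \<open>K\<^sub>i = \<phi>\<^sup>-\<^sup>1(G\<^sub>i)\<close> and let \<open>U\<^sub>n(K)\<close> be the intersection of the normal subgroups of
  \<open>K\<close> of index at most \<open>n\<close>. As \<open>\<Gamma>\<close> is finitely generated, \<open>K\<^sub>i\<close> has only finitely many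
  subgroups of index at most \<open>n\<close>, so \<open>U\<^sub>n(K\<^sub>i)\<close> is normal of finite index and the profinite
  completion of \<open>K\<^sub>i\<close> is the inverse limit of the finite groups \<open>K\<^sub>i/U\<^sub>n(K\<^sub>i)\<close>.

  Suppose every finite quotient \<open>H\<close> of \<open>\<Gamma>\<close> through which \<open>\<phi>\<close> factors has isomorphic preimages
  of \<open>G\<^sub>1\<close> and \<open>G\<^sub>2\<close>. Taking \<open>H = \<Gamma>/C\<close> for a normal subgroup \<open>C\<close> of finite index inside
  \<open>ker \<phi> \<inter> U\<^sub>n(K\<^sub>1) \<inter> U\<^sub>n(K\<^sub>2)\<close> gives \<open>K\<^sub>1/C \<cong> K\<^sub>2/C\<close>. Isomorphisms preserve
  indices, so this one maps \<open>U\<^sub>n(K\<^sub>1)/C\<close> onto \<open>U\<^sub>n(K\<^sub>2)/C\<close> and induces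
  \<open>K\<^sub>1/U\<^sub>n(K\<^sub>1) \<cong> K\<^sub>2/U\<^sub>n(K\<^sub>2)\<close>. For each \<open>n\<close> there are finitely many such isomorphisms and
  they are compatible under reduction, so by Koenig's lemma there is a compatible sequence of them:
  an isomorphism of the inverse limits, continuous since each coordinate of the image depends on
  a single coordinate of the argument.\<close>

section \<open>Cosets and indices\<close>

definition index :: "('a, 'm) monoid_scheme \<Rightarrow> 'a set \<Rightarrow> nat" where
  "index K N = card (rcosets\<^bsub>K\<^esub> N)"

lemma rcosets_eq_image: "rcosets\<^bsub>K\<^esub> N = (\<lambda>a. N #>\<^bsub>K\<^esub> a) ` carrier K"
  by (auto simp: RCOSETS_def)

lemma carrier_FactGroup_eq_rcosets: "carrier (K Mod N) = rcosets\<^bsub>K\<^esub> N"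
  by (simp add: FactGroup_def)

lemma fin_index_normals_iff: "N \<in> fin_index_normals K \<longleftrightarrow> N \<lhd> K \<and> finite (rcosets\<^bsub>K\<^esub> N)"
  by (simp add: fin_index_normals_def carrier_FactGroup_eq_rcosets)

lemma (in group) rcos_eq_iff:
  assumes "subgroup H G" "x \<in> carrier G" "y \<in> carrier G"
  shows "H #> x = H #> y \<longleftrightarrow> x \<otimes> inv y \<in> H"
proof
  assume "H #> x = H #> y"
  then have "x \<in> H #> y" using rcos_self[OF assms(2,1)] by simp
  then show "x \<otimes> inv y \<in> H" using subgroup.rcos_module[OF assms(1) is_group assms(3,2)] by blast
next
  assume "x \<otimes> inv y \<in> H"
  then have "x \<in> H #> y" using subgroup.rcos_module[OF assms(1) is_group assms(3,2)] by blast
  then show "H #> x = H #> y" using repr_independence[OF _ assms(3,1)] by simp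
qed

lemma (in group) rcos_mem_iff:
  assumes "subgroup H G" "x \<in> carrier G" "y \<in> H #> x"
  shows "y \<in> H \<longleftrightarrow> x \<in> H"
proof
  assume "y \<in> H"
  have "H #> x = H #> y" by (rule repr_independence[OF assms(3,2,1)])
  also have "\<dots> = H" using \<open>y \<in> H\<close> subgroup.rcos_const[OF assms(1) is_group] by blast
  finally show "x \<in> H" using coset_join1[OF _ assms(2,1)] by blast
next
  assume "x \<in> H"
  then show "y \<in> H" using coset_join2[OF assms(2,1)] assms(3) by simp
qed

lemma (in group) rcos_in_rcosets:
  assumes "subgroup H G" "D \<in> rcosets H" "x \<in> carrier G"
  shows "D #> x \<in> rcosets H"
proof -
  obtain y where y: "y \<in> carrier G" "D = H #> y" using assms(2) unfolding RCOSETS_def by blast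
  then have "D #> x = H #> (y \<otimes> x)" using coset_mult_assoc[OF subgroup.subset[OF assms(1)]] assms(3) by simp
  then show ?thesis using rcosetsI[OF subgroup.subset[OF assms(1)]] y(1) assms(3) by simp
qed

lemma card_image_le_if_factors:
  assumes "\<And>p q. p \<in> S \<Longrightarrow> q \<in> S \<Longrightarrow> g p = g q \<Longrightarrow> f p = f q" and "finite (g ` S)"
  shows "finite (f ` S) \<and> card (f ` S) \<le> card (g ` S)"
proof -
  obtain h where "\<And>x. x \<in> S \<Longrightarrow> f x = h (g x)"
    using function_factors_left_gen[of "\<lambda>x. x \<in> S" g f] assms(1) by blast
  then have "f ` S = h ` g ` S" by (auto simp: image_image)
  then show ?thesis using assms(2) card_image_le by auto
qed

lemma (in group) subgroup_carrier_Inter: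
  assumes "\<And>N. N \<in> F \<Longrightarrow> subgroup N G"
  shows "subgroup (carrier G \<inter> \<Inter>F) G"
  using subgroup_Inter[of "insert (carrier G) F" G] assms subgroup_self by auto

lemma (in group) normal_carrier_Inter:
  assumes "\<And>N. N \<in> F \<Longrightarrow> N \<lhd> G"
  shows "carrier G \<inter> \<Inter>F \<lhd> G"
proof -
  have "subgroup (carrier G \<inter> \<Inter>F) G" using subgroup_carrier_Inter assms normal_imp_subgroup by blast
  moreover have "x \<otimes> h \<otimes> inv x \<in> carrier G \<inter> \<Inter>F" if "x \<in> carrier G" "h \<in> carrier G \<inter> \<Inter>F" for x h
    using that assms normal_inv_iff by auto
  ultimately show ?thesis using normal_inv_iff by blast
qed

lemma (in group) finite_rcosets_carrier_Inter:
  assumes "finite F" "\<And>N. N \<in> F \<Longrightarrow> subgroup N G \<and> finite (rcosets N)"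
  shows "finite (rcosets (carrier G \<inter> \<Inter>F))"
proof -
  let ?I = "carrier G \<inter> \<Inter>F" and ?g = "\<lambda>a. \<lambda>N\<in>F. N #> a"
  have sub: "subgroup ?I G" using subgroup_carrier_Inter assms(2) by blast
  have "?g ` carrier G \<subseteq> (\<Pi>\<^sub>E N\<in>F. rcosets N)"
    using rcosetsI[OF subgroup.subset] assms(2) by (auto simp: PiE_iff)
  then have "finite (?g ` carrier G)"
    using finite_PiE[OF assms(1), of "\<lambda>N. rcosets N"] assms(2) finite_subset by blast
  moreover have "?I #> p = ?I #> q" if pq: "p \<in> carrier G" "q \<in> carrier G" "?g p = ?g q" for p q
  proof -
    have "p \<otimes> inv q \<in> N" if N: "N \<in> F" for N
    proof -
      have "N #> p = N #> q" using pq(3) N by (metis restrict_apply')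
      then show ?thesis using rcos_eq_iff[of N p q] assms(2)[OF N] pq(1,2) by blast
    qed
    then have "p \<otimes> inv q \<in> ?I" using pq(1,2) by blast
    then show ?thesis using rcos_eq_iff[OF sub pq(1,2)] by blast
  qed
  ultimately have "finite ((\<lambda>a. ?I #> a) ` carrier G)"
    using card_image_le_if_factors[of "carrier G" ?g "\<lambda>a. ?I #> a"] by blast
  then show ?thesis by (simp only: rcosets_eq_image)
qed

lemma preimage_subgroup:
  assumes "h \<in> hom G H" "group G" "group H" "subgroup S H"
  shows "subgroup {x \<in> carrier G. h x \<in> S} G"
proof -
  interpret group_hom G H h using assms by (simp add: group_hom_def group_hom_axioms_def)
  show ?thesis
    by (rule G.subgroupI) (use subgroup.one_closed[OF assms(4)] subgroup.m_inv_closed[OF assms(4)]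
        subgroup.m_closed[OF assms(4)] in auto)
qed

lemma finite_rcosets_preimage:
  assumes "h \<in> hom G H" "group G" "group H" "subgroup S H" "finite (h ` carrier G)"
  shows "finite (rcosets\<^bsub>G\<^esub> {x \<in> carrier G. h x \<in> S})"
proof -
  interpret group_hom G H h using assms by (simp add: group_hom_def group_hom_axioms_def)
  let ?P = "{x \<in> carrier G. h x \<in> S}"
  have "?P #>\<^bsub>G\<^esub> p = ?P #>\<^bsub>G\<^esub> q" if "p \<in> carrier G" "q \<in> carrier G" "h p = h q" for p q
  proof -
    have "h (p \<otimes>\<^bsub>G\<^esub> inv\<^bsub>G\<^esub> q) = h q \<otimes>\<^bsub>H\<^esub> inv\<^bsub>H\<^esub> h q"
      using that(1,2) by (simp add: that(3))
    then have "h (p \<otimes>\<^bsub>G\<^esub> inv\<^bsub>G\<^esub> q) = \<one>\<^bsub>H\<^esub>" using that(2) by simp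
    then have "p \<otimes>\<^bsub>G\<^esub> inv\<^bsub>G\<^esub> q \<in> ?P" using that subgroup.one_closed[OF assms(4)] by simp
    then show ?thesis using G.rcos_eq_iff[OF preimage_subgroup[OF assms(1-4)] that(1,2)] by simp
  qed
  then have "finite ((\<lambda>a. ?P #>\<^bsub>G\<^esub> a) ` carrier G)"
    using card_image_le_if_factors[of "carrier G" h "\<lambda>a. ?P #>\<^bsub>G\<^esub> a"] assms(5) by blast
  then show ?thesis by (simp only: rcosets_eq_image)
qed

lemma (in group) finite_rcosets_tower:
  assumes "subgroup K G" "subgroup U G" "U \<subseteq> K"
    and "finite (rcosets\<^bsub>G\<lparr>carrier := K\<rparr>\<^esub> U)" "finite (rcosets K)"
  shows "finite (rcosets U) \<and> card (rcosets U) \<le> card (rcosets\<^bsub>G\<lparr>carrier := K\<rparr>\<^esub> U) * card (rcosets K)"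
proof -
  define rep where "rep = (\<lambda>E::'a set. SOME t. t \<in> E)"
  let ?F = "\<lambda>(D, E). D #> rep E" and ?P = "(rcosets\<^bsub>G\<lparr>carrier := K\<rparr>\<^esub> U) \<times> (rcosets K)"
  have sub: "rcosets U \<subseteq> ?F ` ?P"
  proof
    fix W assume "W \<in> rcosets U"
    then obtain g where g: "g \<in> carrier G" "W = U #> g" unfolding RCOSETS_def by blast
    let ?E = "K #> g"
    have "rep ?E \<in> ?E" unfolding rep_def using rcos_self[OF g(1) assms(1)] by (rule someI)
    then obtain k where k: "k \<in> K" "rep ?E = k \<otimes> g" unfolding r_coset_def by blast
    have kc: "k \<in> carrier G" using k(1) subgroup.mem_carrier[OF assms(1)] by blast
    have "inv k \<otimes> rep ?E = g" using k(2) kc g(1) by (simp add: m_assoc[symmetric])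
    then have "W = (U #> inv k) #> rep ?E"
      using coset_mult_assoc[OF subgroup.subset[OF assms(2)] inv_closed[OF kc], of "rep ?E"] k(2) kc g
      by simp
    moreover have "U #> inv k \<in> rcosets\<^bsub>G\<lparr>carrier := K\<rparr>\<^esub> U"
      using subgroup.m_inv_closed[OF assms(1) k(1)] by (auto simp: rcosets_eq_image)
    moreover have "?E \<in> rcosets K" by (rule rcosetsI[OF subgroup.subset[OF assms(1)] g(1)])
    ultimately show "W \<in> ?F ` ?P" by force
  qed
  have fin: "finite (?F ` ?P)" using assms(4,5) by simp
  have "card (rcosets U) \<le> card (?F ` ?P)" by (rule card_mono[OF fin sub])
  also have "\<dots> \<le> card ?P" using assms(4,5) by (intro card_image_le) simp
  also have "\<dots> = card (rcosets\<^bsub>G\<lparr>carrier := K\<rparr>\<^esub> U) * card (rcosets K)" by (rule card_cartesian_product)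
  finally show ?thesis using finite_subset[OF sub fin] by simp
qed

text \<open>The normal core of \<open>V\<close>, as the kernel of the action on its right cosets.\<close>
definition rcosets_action_kernel :: "('a, 'm) monoid_scheme \<Rightarrow> 'a set \<Rightarrow> 'a set" where
  "rcosets_action_kernel G V = {g \<in> carrier G. \<forall>D \<in> rcosets\<^bsub>G\<^esub> V. D #>\<^bsub>G\<^esub> g = D}"

context group
begin

lemma rcos_rcos_mult:
  assumes "subgroup V G" "g \<in> carrier G" "h \<in> carrier G" "D \<in> rcosets V"
  shows "D #> (g \<otimes> h) = (D #> g) #> h"
  using coset_mult_assoc[OF subgroup.rcosets_carrier[OF assms(1) is_group assms(4)] assms(2,3)] by simp

lemma normal_rcosets_action_kernel:
  assumes "subgroup V G"
  shows "rcosets_action_kernel G V \<lhd> G"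
proof -
  let ?C = "rcosets_action_kernel G V"
  have D_inv: "D #> inv g = D" if "g \<in> ?C" "D \<in> rcosets V" for g D
  proof -
    have g: "g \<in> carrier G" using that unfolding rcosets_action_kernel_def by blast
    have "D #> inv g = (D #> g) #> inv g" using that unfolding rcosets_action_kernel_def by simp
    also have "\<dots> = D" using rcos_rcos_mult[OF assms g inv_closed[OF g] that(2)] g
      subgroup.rcosets_carrier[OF assms is_group that(2)] by simp
    finally show ?thesis .
  qed
  have "subgroup ?C G"
  proof (rule subgroupI)
    show "?C \<subseteq> carrier G" unfolding rcosets_action_kernel_def by blast
    have "\<one> \<in> ?C" using subgroup.rcosets_carrier[OF assms is_group]
      unfolding rcosets_action_kernel_def by simp
    then show "?C \<noteq> {}" by blast
    show "inv g \<in> ?C" if "g \<in> ?C" for g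
      using D_inv that unfolding rcosets_action_kernel_def by auto
    show "g \<otimes> h \<in> ?C" if "g \<in> ?C" "h \<in> ?C" for g h
      using that rcos_rcos_mult[OF assms] unfolding rcosets_action_kernel_def by auto
  qed
  moreover have "x \<otimes> g \<otimes> inv x \<in> ?C" if x: "x \<in> carrier G" and g: "g \<in> ?C" for x g
  proof -
    have gc: "g \<in> carrier G" using g unfolding rcosets_action_kernel_def by blast
    have "D #> (x \<otimes> g \<otimes> inv x) = D" if D: "D \<in> rcosets V" for D
    proof -
      have Dx: "D #> x \<in> rcosets V" by (rule rcos_in_rcosets[OF assms D x])
      have "D #> (x \<otimes> g \<otimes> inv x) = ((D #> x) #> g) #> inv x"
        using rcos_rcos_mult[OF assms] D Dx x gc by simp
      also have "\<dots> = (D #> x) #> inv x" using g Dx unfolding rcosets_action_kernel_def by simp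
      also have "\<dots> = D" using rcos_rcos_mult[OF assms x inv_closed[OF x] D] x
          coset_mult_one[OF subgroup.rcosets_carrier[OF assms is_group D]] by simp
      finally show ?thesis .
    qed
    then show ?thesis unfolding rcosets_action_kernel_def using x gc by simp
  qed
  ultimately show ?thesis using normal_inv_iff by blast
qed

lemma rcosets_action_kernel_subset:
  assumes "subgroup V G"
  shows "rcosets_action_kernel G V \<subseteq> V"
proof
  fix g assume g: "g \<in> rcosets_action_kernel G V"
  have "V #> g = V"
    using subgroup.subgroup_in_rcosets[OF assms is_group] g unfolding rcosets_action_kernel_def by blast
  then show "g \<in> V" using coset_join1[OF _ _ assms] g unfolding rcosets_action_kernel_def by blast
qed

lemma finite_rcosets_action_kernel:
  assumes "subgroup V G" "finite (rcosets V)"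
  shows "finite (rcosets (rcosets_action_kernel G V))"
proof -
  let ?C = "rcosets_action_kernel G V" and ?g = "\<lambda>g. \<lambda>D\<in>rcosets V. D #> g"
  have "?g ` carrier G \<subseteq> (\<Pi>\<^sub>E D\<in>rcosets V. rcosets V)"
    using rcos_in_rcosets[OF assms(1)] by auto
  then have "finite (?g ` carrier G)"
    using finite_PiE[OF assms(2), of "\<lambda>_. rcosets V"] assms(2) finite_subset by blast
  moreover have "?C #> p = ?C #> q" if pq: "p \<in> carrier G" "q \<in> carrier G" "?g p = ?g q" for p q
  proof -
    have "D #> (p \<otimes> inv q) = D" if D: "D \<in> rcosets V" for D
    proof -
      have "D #> (p \<otimes> inv q) = (D #> q) #> inv q"
        using rcos_rcos_mult[OF assms(1) pq(1) inv_closed[OF pq(2)] D] pq(3) D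
        by (metis restrict_apply')
      also have "\<dots> = D" using rcos_rcos_mult[OF assms(1) pq(2) inv_closed[OF pq(2)] D] pq(2)
        subgroup.rcosets_carrier[OF assms(1) is_group D] by simp
      finally show ?thesis .
    qed
    then have "p \<otimes> inv q \<in> ?C" unfolding rcosets_action_kernel_def using pq by simp
    then show ?thesis
      using rcos_eq_iff[OF normal_imp_subgroup[OF normal_rcosets_action_kernel[OF assms(1)]] pq(1,2)] by simp
  qed
  ultimately have "finite ((\<lambda>a. ?C #> a) ` carrier G)"
    using card_image_le_if_factors[of "carrier G" ?g "\<lambda>a. ?C #> a"] by blast
  then show ?thesis by (simp only: rcosets_eq_image)
qed

lemma ex_normal_subset_Inter:
  assumes "finite F" "\<And>N. N \<in> F \<Longrightarrow> subgroup N G \<and> finite (rcosets N)"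
  obtains C where "C \<lhd> G" "finite (rcosets C)" "C \<subseteq> \<Inter>F"
proof -
  let ?V = "carrier G \<inter> \<Inter>F"
  have V: "subgroup ?V G" "finite (rcosets ?V)"
    using subgroup_carrier_Inter[of F] finite_rcosets_carrier_Inter[OF assms] assms(2) by auto
  show thesis
    using that normal_rcosets_action_kernel[OF V(1)] finite_rcosets_action_kernel[OF V]
      rcosets_action_kernel_subset[OF V(1)] by blast
qed

end

section \<open>Subgroups of bounded index in a finitely generated group\<close>

definition nat_right_action :: "('a, 'm) monoid_scheme \<Rightarrow> ('a \<Rightarrow> nat \<Rightarrow> nat) \<Rightarrow> bool" where
  "nat_right_action G \<rho> \<longleftrightarrow>
     \<rho> \<one>\<^bsub>G\<^esub> = id \<and> (\<forall>g\<in>carrier G. \<forall>h\<in>carrier G. \<rho> (g \<otimes>\<^bsub>G\<^esub> h) = \<rho> h \<circ> \<rho> g)"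

definition maps_below :: "nat \<Rightarrow> (nat \<Rightarrow> nat) set" where
  "maps_below m = {f. (\<forall>i\<ge>m. f i = i) \<and> (\<forall>i<m. f i < m)}"

lemma finite_maps_below: "finite (maps_below m)"
proof -
  let ?ext = "\<lambda>f::nat \<Rightarrow> nat. \<lambda>i. if i < m then f i else i"
  have "maps_below m \<subseteq> ?ext ` (\<Pi>\<^sub>E i\<in>{..<m}. {..<m})"
  proof
    fix f assume f: "f \<in> maps_below m"
    then have "f = ?ext (restrict f {..<m})" unfolding maps_below_def by (auto simp: fun_eq_iff)
    moreover have "restrict f {..<m} \<in> (\<Pi>\<^sub>E i\<in>{..<m}. {..<m})" using f unfolding maps_below_def by auto
    ultimately show "f \<in> ?ext ` (\<Pi>\<^sub>E i\<in>{..<m}. {..<m})" by blast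
  qed
  then show ?thesis using finite_subset by (blast intro: finite_PiE)
qed

text \<open>The subgroup coded by generator images \<open>\<sigma>\<close> and a point \<open>i\<close>: the stabiliser of \<open>i\<close> under
  every right action extending \<open>\<sigma>\<close>.\<close>
definition code_stabilizer :: "('a, 'm) monoid_scheme \<Rightarrow> 'a set \<Rightarrow> ('a \<Rightarrow> nat \<Rightarrow> nat) \<times> nat \<Rightarrow> 'a set" where
  "code_stabilizer G S c =
     {g \<in> carrier G. \<forall>\<rho>. nat_right_action G \<rho> \<and> (\<forall>s\<in>S. \<rho> s = fst c s) \<longrightarrow> \<rho> g (snd c) = snd c}"

context group
begin

lemma nat_right_action_inv:
  assumes "nat_right_action G \<rho>" "h \<in> carrier G"
  shows "\<rho> (inv h) \<circ> \<rho> h = id" "\<rho> h \<circ> \<rho> (inv h) = id"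
proof -
  have one: "\<rho> \<one> = id" and mult: "\<And>g k. g \<in> carrier G \<Longrightarrow> k \<in> carrier G \<Longrightarrow> \<rho> (g \<otimes> k) = \<rho> k \<circ> \<rho> g"
    using assms(1) unfolding nat_right_action_def by auto
  show "\<rho> (inv h) \<circ> \<rho> h = id" using mult[of h "inv h"] one assms(2) by simp
  show "\<rho> h \<circ> \<rho> (inv h) = id" using mult[of "inv h" h] one assms(2) by simp
qed

lemma nat_right_action_eq_on_generate:
  assumes "S \<subseteq> carrier G" "nat_right_action G \<rho>" "nat_right_action G \<rho>'"
    and "\<And>s. s \<in> S \<Longrightarrow> \<rho> s = \<rho>' s" "g \<in> generate G S"
  shows "\<rho> g = \<rho>' g"
  using assms(5)
proof (induction rule: generate.induct)
  case one
  then show ?case using assms(2,3) unfolding nat_right_action_def by simp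
next
  case (incl h)
  then show ?case using assms(4) by blast
next
  case (inv h)
  have h: "h \<in> carrier G" using inv assms(1) by blast
  have "\<rho> (inv h) = \<rho> (inv h) \<circ> (\<rho>' h \<circ> \<rho>' (inv h))" using nat_right_action_inv(2)[OF assms(3) h] by simp
  also have "\<dots> = (\<rho> (inv h) \<circ> \<rho> h) \<circ> \<rho>' (inv h)" using assms(4)[OF inv] by (simp add: o_assoc)
  also have "\<dots> = \<rho>' (inv h)" using nat_right_action_inv(1)[OF assms(2) h] by simp
  finally show ?case .
next
  case (eng h1 h2)
  then have "h1 \<in> carrier G" "h2 \<in> carrier G" using generate_incl[OF assms(1)] by blast+
  then show ?case using eng.IH assms(2,3) unfolding nat_right_action_def by simp
qed

text \<open>Number the cosets of \<open>U\<close> by \<open>{..<m}\<close> and let \<open>G\<close> act on the numbers; \<open>U\<close> is the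
  stabiliser of its own number.\<close>
lemma coset_numbering_action:
  assumes "subgroup U G" "finite (rcosets U)" "card (rcosets U) \<le> m"
  obtains \<rho> i where "nat_right_action G \<rho>" "\<And>g. g \<in> carrier G \<Longrightarrow> \<rho> g \<in> maps_below m" "i < m"
    "\<And>g. g \<in> carrier G \<Longrightarrow> \<rho> g i = i \<longleftrightarrow> g \<in> U"
proof -
  let ?R = "rcosets U"
  obtain e c where ec: "e ` ?R = {i::nat. i < c}" "inj_on e ?R"
    using finite_imp_inj_to_nat_seg[OF assms(2)] by blast
  have cm: "c \<le> m" using card_image[OF ec(2)] ec(1) assms(3) by simp
  define e' where "e' = inv_into ?R e"
  have e'R: "e' i \<in> ?R" and e_e': "e (e' i) = i" if "i < c" for i
  proof -
    have "i \<in> e ` ?R" using ec(1) that by simp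
    then show "e' i \<in> ?R" "e (e' i) = i" unfolding e'_def by (simp_all add: inv_into_into f_inv_into_f)
  qed
  have e'_e: "e' (e D) = D" if "D \<in> ?R" for D unfolding e'_def by (rule inv_into_f_f[OF ec(2) that])
  have eR: "e D < c" if "D \<in> ?R" for D using ec(1) that by blast
  have Rc: "D \<subseteq> carrier G" if "D \<in> ?R" for D by (rule subgroup.rcosets_carrier[OF assms(1) is_group that])
  define \<rho> where "\<rho> = (\<lambda>g i. if i < c then e (e' i #> g) else i)"
  have "nat_right_action G \<rho>"
    unfolding nat_right_action_def
  proof (intro conjI ballI ext)
    show "\<rho> \<one> i = id i" for i
      using e'R[of i] e_e'[of i] coset_mult_one[OF Rc[OF e'R]] unfolding \<rho>_def by simp
    fix g h i assume g: "g \<in> carrier G" and h: "h \<in> carrier G"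
    show "\<rho> (g \<otimes> h) i = (\<rho> h \<circ> \<rho> g) i"
    proof (cases "i < c")
      case True
      have Dg: "e' i #> g \<in> ?R" by (rule rcos_in_rcosets[OF assms(1) e'R[OF True] g])
      have "(\<rho> h \<circ> \<rho> g) i = e ((e' i #> g) #> h)" unfolding \<rho>_def using True eR[OF Dg] e'_e[OF Dg] by simp
      also have "\<dots> = \<rho> (g \<otimes> h) i" using True coset_mult_assoc[OF Rc[OF e'R[OF True]] g h] unfolding \<rho>_def by simp
      finally show ?thesis by simp
    qed (simp add: \<rho>_def)
  qed
  moreover have "\<rho> g \<in> maps_below m" if g: "g \<in> carrier G" for g
  proof -
    have "e (e' i #> g) < c" if "i < c" for i by (rule eR[OF rcos_in_rcosets[OF assms(1) e'R[OF that] g]])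
    moreover have "\<rho> g i = i" if "m \<le> i" for i using that cm unfolding \<rho>_def by simp
    ultimately show ?thesis using cm unfolding maps_below_def by (simp add: \<rho>_def) (meson order_less_le_trans)
  qed
  moreover have UR: "U \<in> ?R" by (rule subgroup.subgroup_in_rcosets[OF assms(1) is_group])
  then have "e U < m" using eR cm by fastforce
  moreover have "\<rho> g (e U) = e U \<longleftrightarrow> g \<in> U" if g: "g \<in> carrier G" for g
  proof -
    have "\<rho> g (e U) = e (U #> g)" using eR[OF UR] e'_e[OF UR] unfolding \<rho>_def by simp
    also have "\<dots> = e U \<longleftrightarrow> U #> g = U" by (rule inj_on_eq_iff[OF ec(2) rcos_in_rcosets[OF assms(1) UR g] UR])
    also have "\<dots> \<longleftrightarrow> g \<in> U" using coset_join1[OF _ g assms(1)] coset_join2[OF g assms(1)] by blast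
    finally show ?thesis .
  qed
  ultimately show thesis using that by blast
qed

lemma subgroup_eq_code_stabilizer:
  assumes "finite S" "S \<subseteq> carrier G" "generate G S = carrier G"
    and "subgroup U G" "finite (rcosets U)" "card (rcosets U) \<le> m"
  shows "U \<in> code_stabilizer G S ` ((\<Pi>\<^sub>E s\<in>S. maps_below m) \<times> {..<m})"
proof -
  obtain \<rho> i where \<rho>: "nat_right_action G \<rho>" "\<And>g. g \<in> carrier G \<Longrightarrow> \<rho> g \<in> maps_below m" "i < m"
    and stab: "\<And>g. g \<in> carrier G \<Longrightarrow> \<rho> g i = i \<longleftrightarrow> g \<in> U"
    using coset_numbering_action[OF assms(4-6)] by blast
  have "code_stabilizer G S (restrict \<rho> S, i) = U"
  proof (intro equalityI subsetI)
    fix g assume g: "g \<in> code_stabilizer G S (restrict \<rho> S, i)"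
    then have "g \<in> carrier G" "\<rho> g i = i" using \<rho>(1) unfolding code_stabilizer_def by simp_all
    then show "g \<in> U" using stab by blast
  next
    fix g assume gU: "g \<in> U"
    then have g: "g \<in> carrier G" using subgroup.mem_carrier[OF assms(4)] by blast
    have "\<rho>' g i = i" if "nat_right_action G \<rho>'" "\<forall>s\<in>S. \<rho>' s = restrict \<rho> S s" for \<rho>'
    proof -
      have "\<rho>' g = \<rho> g"
        using nat_right_action_eq_on_generate[OF assms(2) that(1) \<rho>(1)] that(2) g assms(3) by simp
      then show ?thesis using stab[OF g] gU by simp
    qed
    then show "g \<in> code_stabilizer G S (restrict \<rho> S, i)" unfolding code_stabilizer_def using g by auto
  qed
  moreover have "(restrict \<rho> S, i) \<in> (\<Pi>\<^sub>E s\<in>S. maps_below m) \<times> {..<m}" using \<rho>(2,3) assms(2) by auto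
  ultimately show ?thesis by (metis image_eqI)
qed

lemma finite_subgroups_index_le:
  assumes "finitely_generated_group G"
  shows "finite {U. subgroup U G \<and> finite (rcosets U) \<and> card (rcosets U) \<le> m}"
proof -
  obtain S where S: "finite S" "S \<subseteq> carrier G" "generate G S = carrier G"
    using assms unfolding finitely_generated_group_def by blast
  have "{U. subgroup U G \<and> finite (rcosets U) \<and> card (rcosets U) \<le> m}
        \<subseteq> code_stabilizer G S ` ((\<Pi>\<^sub>E s\<in>S. maps_below m) \<times> {..<m})"
    using subgroup_eq_code_stabilizer[OF S] by blast
  moreover have "finite ((\<Pi>\<^sub>E s\<in>S. maps_below m) \<times> {..<m})"
    using finite_PiE[OF S(1), of "\<lambda>_. maps_below m"] finite_maps_below by simp
  ultimately show ?thesis using finite_subset by blast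
qed

end

definition Inter_index_le :: "('a, 'm) monoid_scheme \<Rightarrow> nat \<Rightarrow> 'a set" where
  "Inter_index_le K n = carrier K \<inter> \<Inter>{N \<in> fin_index_normals K. index K N \<le> n}"

lemma Inter_index_le_subset: "N \<in> fin_index_normals K \<Longrightarrow> index K N \<le> n \<Longrightarrow> Inter_index_le K n \<subseteq> N"
  by (auto simp: Inter_index_le_def)

lemma Inter_index_le_antimono: "n \<le> m \<Longrightarrow> Inter_index_le K m \<subseteq> Inter_index_le K n"
  by (auto simp: Inter_index_le_def)

lemma (in group) Inter_index_le_in_fin_index_normals:
  assumes "finite {N \<in> fin_index_normals G. index G N \<le> n}"
  shows "Inter_index_le G n \<in> fin_index_normals G"
proof -
  let ?F = "{N \<in> fin_index_normals G. index G N \<le> n}"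
  have "carrier G \<inter> \<Inter>?F \<lhd> G" by (rule normal_carrier_Inter) (simp add: fin_index_normals_iff)
  moreover have "finite (rcosets (carrier G \<inter> \<Inter>?F))"
    by (rule finite_rcosets_carrier_Inter[OF assms]) (simp add: fin_index_normals_iff normal_imp_subgroup)
  ultimately show ?thesis unfolding fin_index_normals_iff Inter_index_le_def by simp
qed

section \<open>Relations inducing isomorphisms of quotients\<close>

text \<open>\<open>R\<close> is the graph of an isomorphism \<open>K1/A \<cong> K2/B\<close>, lifted to a subgroup of \<open>K1 \<times> K2\<close>.
  Working with such relations instead of the quotient groups avoids coset-valued carriers.\<close>
locale quot_iso_rel = K1: group K1 + K2: group K2
  for K1 :: "('a, 'c) monoid_scheme" and K2 :: "('b, 'd) monoid_scheme" +
  fixes A :: "'a set" and B :: "'b set" and R :: "('a \<times> 'b) set"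
  assumes subgroup_A: "subgroup A K1" and subgroup_B: "subgroup B K2"
    and rel_carrier: "R \<subseteq> carrier K1 \<times> carrier K2"
    and rel_mult: "(a, b) \<in> R \<Longrightarrow> (a', b') \<in> R \<Longrightarrow> (a \<otimes>\<^bsub>K1\<^esub> a', b \<otimes>\<^bsub>K2\<^esub> b') \<in> R"
    and rel_inv: "(a, b) \<in> R \<Longrightarrow> (inv\<^bsub>K1\<^esub> a, inv\<^bsub>K2\<^esub> b) \<in> R"
    and fst_rel: "fst ` R = carrier K1" and snd_rel: "snd ` R = carrier K2"
    and subgroups_rel: "A \<times> B \<subseteq> R"
    and rel_mem_iff: "(a, b) \<in> R \<Longrightarrow> a \<in> A \<longleftrightarrow> b \<in> B"
begin

lemma rel_carrierD: "(a, b) \<in> R \<Longrightarrow> a \<in> carrier K1" "(a, b) \<in> R \<Longrightarrow> b \<in> carrier K2"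
  using rel_carrier by auto

lemma ex_rel_right: "a \<in> carrier K1 \<Longrightarrow> \<exists>b. (a, b) \<in> R"
  using fst_rel by force

lemma one_rel: "(\<one>\<^bsub>K1\<^esub>, \<one>\<^bsub>K2\<^esub>) \<in> R"
  using subgroups_rel subgroup.one_closed[OF subgroup_A] subgroup.one_closed[OF subgroup_B] by blast

lemma rel_div: "(a, b) \<in> R \<Longrightarrow> (a', b') \<in> R \<Longrightarrow> (a \<otimes>\<^bsub>K1\<^esub> inv\<^bsub>K1\<^esub> a', b \<otimes>\<^bsub>K2\<^esub> inv\<^bsub>K2\<^esub> b') \<in> R"
  by (rule rel_mult[OF _ rel_inv])

lemma rel_div_mem_iff:
  "(a, b) \<in> R \<Longrightarrow> (a', b') \<in> R \<Longrightarrow> a \<otimes>\<^bsub>K1\<^esub> inv\<^bsub>K1\<^esub> a' \<in> A \<longleftrightarrow> b \<otimes>\<^bsub>K2\<^esub> inv\<^bsub>K2\<^esub> b' \<in> B"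
  by (rule rel_mem_iff[OF rel_div])

lemma rel_same_left: "(a, b) \<in> R \<Longrightarrow> (a, b') \<in> R \<Longrightarrow> b \<otimes>\<^bsub>K2\<^esub> inv\<^bsub>K2\<^esub> b' \<in> B"
  using rel_div_mem_iff[of a b a b'] rel_carrierD subgroup.one_closed[OF subgroup_A] by simp

lemma quot_iso_rel_converse: "quot_iso_rel K2 K1 B A (R\<inverse>)"
proof -
  have "fst ` (R\<inverse>) = snd ` R" "snd ` (R\<inverse>) = fst ` R" by force+
  then show ?thesis
    by (intro quot_iso_rel.intro quot_iso_rel_axioms.intro K1.is_group K2.is_group subgroup_A subgroup_B)
      (use rel_carrier rel_mult rel_inv fst_rel snd_rel subgroups_rel rel_mem_iff in auto)
qed

lemma rel_saturated:
  assumes "a \<in> carrier K1" "b \<in> carrier K2" "(a', b') \<in> R"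
    and "A #>\<^bsub>K1\<^esub> a = A #>\<^bsub>K1\<^esub> a'" "B #>\<^bsub>K2\<^esub> b = B #>\<^bsub>K2\<^esub> b'"
  shows "(a, b) \<in> R"
proof -
  have c: "a' \<in> carrier K1" "b' \<in> carrier K2" using rel_carrierD assms(3) by auto
  have "(a \<otimes>\<^bsub>K1\<^esub> inv\<^bsub>K1\<^esub> a', b \<otimes>\<^bsub>K2\<^esub> inv\<^bsub>K2\<^esub> b') \<in> R"
    using subgroups_rel K1.rcos_eq_iff[OF subgroup_A assms(1) c(1)] K2.rcos_eq_iff[OF subgroup_B assms(2) c(2)]
      assms(4,5) by blast
  from rel_mult[OF this assms(3)] show ?thesis using assms(1,2) c by (simp add: K1.m_assoc K2.m_assoc)
qed

end

lemma finite_quot_iso_rels: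
  assumes "group K1" "group K2" "subgroup A K1" "subgroup B K2"
    and "finite (rcosets\<^bsub>K1\<^esub> A)" "finite (rcosets\<^bsub>K2\<^esub> B)"
  shows "finite {R. quot_iso_rel K1 K2 A B R}"
proof -
  interpret K1: group K1 by fact
  interpret K2: group K2 by fact
  define f where "f R = (\<lambda>p. (A #>\<^bsub>K1\<^esub> fst p, B #>\<^bsub>K2\<^esub> snd p)) ` R" for R
  define g where "g P = {(a, b) \<in> carrier K1 \<times> carrier K2. (A #>\<^bsub>K1\<^esub> a, B #>\<^bsub>K2\<^esub> b) \<in> P}" for P
  have g_f: "g (f R) = R" if "quot_iso_rel K1 K2 A B R" for R
  proof -
    interpret quot_iso_rel K1 K2 A B R by fact
    show ?thesis
    proof (intro equalityI subsetI)
      fix p assume p: "p \<in> R"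
      then have "(A #>\<^bsub>K1\<^esub> fst p, B #>\<^bsub>K2\<^esub> snd p) \<in> f R" unfolding f_def by (rule imageI)
      moreover have "p \<in> carrier K1 \<times> carrier K2" using p rel_carrier by blast
      ultimately show "p \<in> g (f R)" unfolding g_def by (cases p) simp
    next
      fix p assume "p \<in> g (f R)"
      then obtain a b q where "p = (a, b)" "a \<in> carrier K1" "b \<in> carrier K2" "q \<in> R"
        "A #>\<^bsub>K1\<^esub> a = A #>\<^bsub>K1\<^esub> fst q" "B #>\<^bsub>K2\<^esub> b = B #>\<^bsub>K2\<^esub> snd q"
        unfolding f_def g_def by blast
      then show "p \<in> R" using rel_saturated[of a b "fst q" "snd q"] by simp
    qed
  qed
  then have "inj_on f {R. quot_iso_rel K1 K2 A B R}" by (metis inj_on_inverseI mem_Collect_eq)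
  moreover have "f R \<subseteq> (rcosets\<^bsub>K1\<^esub> A) \<times> (rcosets\<^bsub>K2\<^esub> B)" if "quot_iso_rel K1 K2 A B R" for R
    using quot_iso_rel.rel_carrier[OF that] K1.rcosetsI[OF subgroup.subset[OF assms(3)]]
      K2.rcosetsI[OF subgroup.subset[OF assms(4)]] unfolding f_def by auto
  then have "f ` {R. quot_iso_rel K1 K2 A B R} \<subseteq> Pow ((rcosets\<^bsub>K1\<^esub> A) \<times> (rcosets\<^bsub>K2\<^esub> B))" by blast
  then have "finite (f ` {R. quot_iso_rel K1 K2 A B R})" by (rule finite_subset) (use assms(5,6) in simp)
  ultimately show ?thesis using finite_imageD by blast
qed

context quot_iso_rel
begin

lemma normal_pullback:
  assumes "N \<lhd> K2"
  shows "R\<inverse> `` N \<lhd> K1"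
proof -
  have N: "subgroup N K2" using assms normal_imp_subgroup by blast
  have "subgroup (R\<inverse> `` N) K1"
  proof (rule K1.subgroupI)
    show "R\<inverse> `` N \<subseteq> carrier K1" using rel_carrier by auto
    show "R\<inverse> `` N \<noteq> {}" using one_rel subgroup.one_closed[OF N] by blast
    show "inv\<^bsub>K1\<^esub> a \<in> R\<inverse> `` N" if "a \<in> R\<inverse> `` N" for a
      using that rel_inv subgroup.m_inv_closed[OF N] by blast
    show "a \<otimes>\<^bsub>K1\<^esub> a' \<in> R\<inverse> `` N" if "a \<in> R\<inverse> `` N" "a' \<in> R\<inverse> `` N" for a a'
      using that rel_mult subgroup.m_closed[OF N] by blast
  qed
  moreover have "x \<otimes>\<^bsub>K1\<^esub> a \<otimes>\<^bsub>K1\<^esub> inv\<^bsub>K1\<^esub> x \<in> R\<inverse> `` N" if x: "x \<in> carrier K1" and a: "a \<in> R\<inverse> `` N" for x a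
  proof -
    obtain b where b: "b \<in> N" "(a, b) \<in> R" using a by blast
    obtain y where y: "(x, y) \<in> R" using ex_rel_right[OF x] by blast
    have "(x \<otimes>\<^bsub>K1\<^esub> a \<otimes>\<^bsub>K1\<^esub> inv\<^bsub>K1\<^esub> x, y \<otimes>\<^bsub>K2\<^esub> b \<otimes>\<^bsub>K2\<^esub> inv\<^bsub>K2\<^esub> y) \<in> R"
      by (rule rel_mult[OF rel_mult[OF y b(2)] rel_inv[OF y]])
    moreover have "y \<otimes>\<^bsub>K2\<^esub> b \<otimes>\<^bsub>K2\<^esub> inv\<^bsub>K2\<^esub> y \<in> N"
      using assms K2.normal_inv_iff rel_carrierD(2)[OF y] b(1) by blast
    ultimately show ?thesis by blast
  qed
  ultimately show ?thesis using K1.normal_inv_iff by blast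
qed

lemma pullback_mem_iff:
  assumes "subgroup N K2" "B \<subseteq> N" "(a, b) \<in> R"
  shows "a \<in> R\<inverse> `` N \<longleftrightarrow> b \<in> N"
proof
  assume "a \<in> R\<inverse> `` N"
  then obtain b' where b': "b' \<in> N" "(a, b') \<in> R" by blast
  have c: "b \<in> carrier K2" "b' \<in> carrier K2" using rel_carrierD(2) b'(2) assms(3) by auto
  have "b' \<otimes>\<^bsub>K2\<^esub> inv\<^bsub>K2\<^esub> b \<in> N" using rel_same_left[OF b'(2) assms(3)] assms(2) by blast
  then have "N #>\<^bsub>K2\<^esub> b = N #>\<^bsub>K2\<^esub> b'" using K2.rcos_eq_iff[OF assms(1) c(2,1)] by simp
  also have "\<dots> = N" using subgroup.rcos_const[OF assms(1) K2.is_group b'(1)] .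
  finally show "b \<in> N" using K2.coset_join1[OF _ c(1) assms(1)] by blast
next
  assume "b \<in> N"
  then show "a \<in> R\<inverse> `` N" using assms(3) by blast
qed

lemma index_pullback_le:
  assumes "N \<lhd> K2" "finite (rcosets\<^bsub>K2\<^esub> N)"
  shows "finite (rcosets\<^bsub>K1\<^esub> (R\<inverse> `` N)) \<and> index K1 (R\<inverse> `` N) \<le> index K2 N"
proof -
  let ?N' = "R\<inverse> `` N"
  have N: "subgroup N K2" and N': "subgroup ?N' K1"
    using assms(1) normal_pullback[OF assms(1)] normal_imp_subgroup by blast+
  have e1: "rcosets\<^bsub>K1\<^esub> ?N' = (\<lambda>p. ?N' #>\<^bsub>K1\<^esub> fst p) ` R"
    unfolding rcosets_eq_image fst_rel[symmetric] image_image ..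
  have e2: "rcosets\<^bsub>K2\<^esub> N = (\<lambda>p. N #>\<^bsub>K2\<^esub> snd p) ` R"
    unfolding rcosets_eq_image snd_rel[symmetric] image_image ..
  have "?N' #>\<^bsub>K1\<^esub> fst p = ?N' #>\<^bsub>K1\<^esub> fst q"
    if pq: "p \<in> R" "q \<in> R" "N #>\<^bsub>K2\<^esub> snd p = N #>\<^bsub>K2\<^esub> snd q" for p q
  proof -
    have c: "fst p \<in> carrier K1" "fst q \<in> carrier K1" "snd p \<in> carrier K2" "snd q \<in> carrier K2"
      using rel_carrier pq(1,2) by auto
    have "(fst p \<otimes>\<^bsub>K1\<^esub> inv\<^bsub>K1\<^esub> fst q, snd p \<otimes>\<^bsub>K2\<^esub> inv\<^bsub>K2\<^esub> snd q) \<in> R"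
      using rel_div[of "fst p" "snd p" "fst q" "snd q"] pq(1,2) by simp
    moreover have "snd p \<otimes>\<^bsub>K2\<^esub> inv\<^bsub>K2\<^esub> snd q \<in> N" using pq(3) K2.rcos_eq_iff[OF N c(3,4)] by simp
    ultimately have "fst p \<otimes>\<^bsub>K1\<^esub> inv\<^bsub>K1\<^esub> fst q \<in> ?N'" by (rule ImageI[OF converseI])
    then show ?thesis using K1.rcos_eq_iff[OF N' c(1,2)] by simp
  qed
  then show ?thesis
    using card_image_le_if_factors[of R "\<lambda>p. N #>\<^bsub>K2\<^esub> snd p" "\<lambda>p. ?N' #>\<^bsub>K1\<^esub> fst p"] assms(2)
    unfolding index_def e1 e2 by blast
qed

text \<open>An isomorphism \<open>K1/A \<cong> K2/B\<close> matches the normal subgroups above \<open>A\<close> and \<open>B\<close> and preserves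
  their indices, so it matches the intersections of those of bounded index.\<close>
lemma rel_Inter_index_le_imp:
  assumes "B \<subseteq> Inter_index_le K2 n" "(a, b) \<in> R" "a \<in> Inter_index_le K1 n"
  shows "b \<in> Inter_index_le K2 n"
proof -
  have "b \<in> N" if N: "N \<in> fin_index_normals K2" "index K2 N \<le> n" for N
  proof -
    have nN: "N \<lhd> K2" and fN: "finite (rcosets\<^bsub>K2\<^esub> N)" using N(1) by (auto simp: fin_index_normals_iff)
    have "R\<inverse> `` N \<in> fin_index_normals K1" "index K1 (R\<inverse> `` N) \<le> n"
      using normal_pullback[OF nN] index_pullback_le[OF nN fN] N(2) by (auto simp: fin_index_normals_iff)
    then have "a \<in> R\<inverse> `` N" using Inter_index_le_subset assms(3) by blast
    moreover have "B \<subseteq> N" using assms(1) Inter_index_le_subset[OF N] by blast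
    ultimately show "b \<in> N" using pullback_mem_iff[OF normal_imp_subgroup[OF nN] _ assms(2)] by blast
  qed
  then show ?thesis using rel_carrierD(2)[OF assms(2)] unfolding Inter_index_le_def by blast
qed

lemma rel_Inter_index_le_iff:
  assumes "A \<subseteq> Inter_index_le K1 n" "B \<subseteq> Inter_index_le K2 n" "(a, b) \<in> R"
  shows "a \<in> Inter_index_le K1 n \<longleftrightarrow> b \<in> Inter_index_le K2 n"
  using rel_Inter_index_le_imp[OF assms(2,3)]
    quot_iso_rel.rel_Inter_index_le_imp[OF quot_iso_rel_converse assms(1), of b a] assms(3)
  by blast

end

definition coarsen_rel ::
    "('a, 'c) monoid_scheme \<Rightarrow> ('b, 'd) monoid_scheme \<Rightarrow> 'a set \<Rightarrow> 'b set \<Rightarrow> ('a \<times> 'b) set \<Rightarrow> ('a \<times> 'b) set"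
  where "coarsen_rel K1 K2 A B R =
    {(a, b). \<exists>a0 b0. (a0, b0) \<in> R \<and> a \<in> A #>\<^bsub>K1\<^esub> a0 \<and> b \<in> B #>\<^bsub>K2\<^esub> b0}"

context quot_iso_rel
begin

lemma subset_coarsen_rel: "subgroup A' K1 \<Longrightarrow> subgroup B' K2 \<Longrightarrow> R \<subseteq> coarsen_rel K1 K2 A' B' R"
  using K1.rcos_self K2.rcos_self rel_carrier unfolding coarsen_rel_def by blast

lemma coarsen_rel_mult:
  assumes "A' \<lhd> K1" "B' \<lhd> K2" "(a, b) \<in> coarsen_rel K1 K2 A' B' R" "(a', b') \<in> coarsen_rel K1 K2 A' B' R"
  shows "(a \<otimes>\<^bsub>K1\<^esub> a', b \<otimes>\<^bsub>K2\<^esub> b') \<in> coarsen_rel K1 K2 A' B' R"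
proof -
  obtain a0 b0 a1 b1 where r: "(a0, b0) \<in> R" "(a1, b1) \<in> R"
    and a: "a \<in> A' #>\<^bsub>K1\<^esub> a0" "a' \<in> A' #>\<^bsub>K1\<^esub> a1" and b: "b \<in> B' #>\<^bsub>K2\<^esub> b0" "b' \<in> B' #>\<^bsub>K2\<^esub> b1"
    using assms(3,4) unfolding coarsen_rel_def by blast
  have "a \<otimes>\<^bsub>K1\<^esub> a' \<in> (A' #>\<^bsub>K1\<^esub> a0) <#>\<^bsub>K1\<^esub> (A' #>\<^bsub>K1\<^esub> a1)" using a unfolding set_mult_def by blast
  then have "a \<otimes>\<^bsub>K1\<^esub> a' \<in> A' #>\<^bsub>K1\<^esub> (a0 \<otimes>\<^bsub>K1\<^esub> a1)"
    using normal.rcos_sum[OF assms(1)] rel_carrierD(1) r by simp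
  moreover have "b \<otimes>\<^bsub>K2\<^esub> b' \<in> (B' #>\<^bsub>K2\<^esub> b0) <#>\<^bsub>K2\<^esub> (B' #>\<^bsub>K2\<^esub> b1)" using b unfolding set_mult_def by blast
  then have "b \<otimes>\<^bsub>K2\<^esub> b' \<in> B' #>\<^bsub>K2\<^esub> (b0 \<otimes>\<^bsub>K2\<^esub> b1)"
    using normal.rcos_sum[OF assms(2)] rel_carrierD(2) r by simp
  ultimately show ?thesis using rel_mult[OF r] unfolding coarsen_rel_def by blast
qed

lemma coarsen_rel_inv:
  assumes "A' \<lhd> K1" "B' \<lhd> K2" "(a, b) \<in> coarsen_rel K1 K2 A' B' R"
  shows "(inv\<^bsub>K1\<^esub> a, inv\<^bsub>K2\<^esub> b) \<in> coarsen_rel K1 K2 A' B' R"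
proof -
  obtain a0 b0 where r: "(a0, b0) \<in> R" and a: "a \<in> A' #>\<^bsub>K1\<^esub> a0" and b: "b \<in> B' #>\<^bsub>K2\<^esub> b0"
    using assms(3) unfolding coarsen_rel_def by blast
  have "inv\<^bsub>K1\<^esub> a \<in> set_inv\<^bsub>K1\<^esub> (A' #>\<^bsub>K1\<^esub> a0)" using a unfolding SET_INV_def by blast
  then have "inv\<^bsub>K1\<^esub> a \<in> A' #>\<^bsub>K1\<^esub> inv\<^bsub>K1\<^esub> a0" using normal.rcos_inv[OF assms(1)] rel_carrierD(1)[OF r] by simp
  moreover have "inv\<^bsub>K2\<^esub> b \<in> set_inv\<^bsub>K2\<^esub> (B' #>\<^bsub>K2\<^esub> b0)" using b unfolding SET_INV_def by blast
  then have "inv\<^bsub>K2\<^esub> b \<in> B' #>\<^bsub>K2\<^esub> inv\<^bsub>K2\<^esub> b0" using normal.rcos_inv[OF assms(2)] rel_carrierD(2)[OF r] by simp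
  ultimately show ?thesis using rel_inv[OF r] unfolding coarsen_rel_def by blast
qed

lemma quot_iso_rel_coarsen_rel:
  assumes "A' \<lhd> K1" "B' \<lhd> K2" and respects: "\<And>a b. (a, b) \<in> R \<Longrightarrow> a \<in> A' \<longleftrightarrow> b \<in> B'"
  shows "quot_iso_rel K1 K2 A' B' (coarsen_rel K1 K2 A' B' R)"
proof -
  let ?S = "coarsen_rel K1 K2 A' B' R"
  have A': "subgroup A' K1" and B': "subgroup B' K2" using assms(1,2) normal_imp_subgroup by blast+
  have RS: "R \<subseteq> ?S" by (rule subset_coarsen_rel[OF A' B'])
  have carrier: "?S \<subseteq> carrier K1 \<times> carrier K2"
    using subgroup.elemrcos_carrier[OF A' K1.is_group] subgroup.elemrcos_carrier[OF B' K2.is_group] rel_carrier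
    unfolding coarsen_rel_def by blast
  have "A' \<times> B' \<subseteq> ?S"
  proof (clarify)
    fix a b assume "a \<in> A'" "b \<in> B'"
    then have "a \<in> A' #>\<^bsub>K1\<^esub> \<one>\<^bsub>K1\<^esub>" "b \<in> B' #>\<^bsub>K2\<^esub> \<one>\<^bsub>K2\<^esub>"
      using K1.coset_mult_one[OF subgroup.subset[OF A']] K2.coset_mult_one[OF subgroup.subset[OF B']] by simp_all
    then show "(a, b) \<in> ?S" using one_rel unfolding coarsen_rel_def by blast
  qed
  moreover have "a \<in> A' \<longleftrightarrow> b \<in> B'" if ab: "(a, b) \<in> ?S" for a b
  proof -
    obtain a0 b0 where r: "(a0, b0) \<in> R" and a: "a \<in> A' #>\<^bsub>K1\<^esub> a0" and b: "b \<in> B' #>\<^bsub>K2\<^esub> b0"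
      using ab unfolding coarsen_rel_def by blast
    have "a \<in> A' \<longleftrightarrow> a0 \<in> A'" by (rule K1.rcos_mem_iff[OF A' rel_carrierD(1)[OF r] a])
    also have "\<dots> \<longleftrightarrow> b0 \<in> B'" by (rule respects[OF r])
    also have "\<dots> \<longleftrightarrow> b \<in> B'" by (rule K2.rcos_mem_iff[OF B' rel_carrierD(2)[OF r] b, symmetric])
    finally show ?thesis .
  qed
  moreover have "fst ` ?S = carrier K1" "snd ` ?S = carrier K2"
    using carrier RS fst_rel snd_rel by force+
  ultimately show ?thesis
    by (intro quot_iso_rel.intro quot_iso_rel_axioms.intro K1.is_group K2.is_group A' B' carrier)
      (use coarsen_rel_mult[OF assms(1,2)] coarsen_rel_inv[OF assms(1,2)] in auto)
qed

lemma rel_subset_if_common_subrel: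
  assumes "quot_iso_rel K1 K2 A' B' R'" "B \<subseteq> B'" "P \<subseteq> R" "P \<subseteq> R'" "fst ` P = carrier K1"
  shows "R \<subseteq> R'"
proof (clarify)
  interpret R': quot_iso_rel K1 K2 A' B' R' by fact
  fix a b assume ab: "(a, b) \<in> R"
  obtain b' where b': "(a, b') \<in> P" using assms(5) rel_carrierD(1)[OF ab] by force
  have c: "b \<in> carrier K2" "b' \<in> carrier K2" using rel_carrierD(2) ab b' assms(3) by auto
  have "b \<otimes>\<^bsub>K2\<^esub> inv\<^bsub>K2\<^esub> b' \<in> B'" using rel_same_left[OF ab] b' assms(2,3) by blast
  then have "(\<one>\<^bsub>K1\<^esub>, b \<otimes>\<^bsub>K2\<^esub> inv\<^bsub>K2\<^esub> b') \<in> R'"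
    using R'.subgroups_rel subgroup.one_closed[OF R'.subgroup_A] by blast
  from R'.rel_mult[OF this] b' assms(4)
  have "(\<one>\<^bsub>K1\<^esub> \<otimes>\<^bsub>K1\<^esub> a, b \<otimes>\<^bsub>K2\<^esub> inv\<^bsub>K2\<^esub> b' \<otimes>\<^bsub>K2\<^esub> b') \<in> R'" by blast
  then show "(a, b) \<in> R'" using c rel_carrierD(1)[OF ab] by (simp add: K2.m_assoc)
qed

end

section \<open>Koenig's lemma for an inverse system of finite sets\<close>

locale inverse_system =
  fixes Lev :: "nat \<Rightarrow> 'r set set"
  assumes finite_level: "\<And>n. finite (Lev n)"
    and upper: "\<And>n m P. n \<le> m \<Longrightarrow> P \<in> Lev m \<Longrightarrow> \<exists>Q\<in>Lev n. P \<subseteq> Q"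
    and coherent: "\<And>n m p P Q Q'. n \<le> m \<Longrightarrow> m \<le> p \<Longrightarrow> P \<in> Lev p \<Longrightarrow> Q \<in> Lev m \<Longrightarrow> Q' \<in> Lev n \<Longrightarrow>
      P \<subseteq> Q \<Longrightarrow> P \<subseteq> Q' \<Longrightarrow> Q \<subseteq> Q'"
begin

definition extendable :: "nat \<Rightarrow> 'r set \<Rightarrow> bool" where
  "extendable n Q \<longleftrightarrow> Q \<in> Lev n \<and> (\<forall>m\<ge>n. \<exists>P\<in>Lev m. P \<subseteq> Q)"

text \<open>Pigeonhole: of the members of level \<open>k\<close> lying above chosen members of all finer levels,
  one occurs infinitely often.\<close>
lemma ex_extendable_below:
  assumes below_S: "\<forall>m\<ge>k. \<exists>P\<in>Lev m. P \<subseteq> S"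
  shows "\<exists>Q. extendable k Q \<and> (\<exists>m\<ge>k. \<exists>P\<in>Lev m. P \<subseteq> Q \<and> P \<subseteq> S)"
proof -
  have "\<forall>m. \<exists>P. k \<le> m \<longrightarrow> P \<in> Lev m \<and> P \<subseteq> S" using below_S by blast
  from choice[OF this] obtain PP where "\<forall>m. k \<le> m \<longrightarrow> PP m \<in> Lev m \<and> PP m \<subseteq> S" by blast
  then have PP: "\<And>m. m \<ge> k \<Longrightarrow> PP m \<in> Lev m \<and> PP m \<subseteq> S" by blast
  have "\<forall>m. \<exists>Q. k \<le> m \<longrightarrow> Q \<in> Lev k \<and> PP m \<subseteq> Q"
  proof
    fix m
    show "\<exists>Q. k \<le> m \<longrightarrow> Q \<in> Lev k \<and> PP m \<subseteq> Q"
    proof (cases "k \<le> m")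
      case True
      then show ?thesis using upper[OF True] PP[OF True] by blast
    qed simp
  qed
  from choice[OF this] obtain QQ where "\<forall>m. k \<le> m \<longrightarrow> QQ m \<in> Lev k \<and> PP m \<subseteq> QQ m" by blast
  then have QQ: "\<And>m. m \<ge> k \<Longrightarrow> QQ m \<in> Lev k \<and> PP m \<subseteq> QQ m" by blast
  have "QQ ` {k..} \<subseteq> Lev k" using QQ by auto
  then have "finite (QQ ` {k..})" using finite_level finite_subset by blast
  from pigeonhole_infinite[OF infinite_Ici this]
  obtain m0 where m0: "k \<le> m0" "infinite {m \<in> {k..}. QQ m = QQ m0}" by auto
  have "extendable k (QQ m0)"
    unfolding extendable_def
  proof (intro conjI allI impI)
    show "QQ m0 \<in> Lev k" using QQ m0(1) by blast
    fix m1 assume m1: "k \<le> m1"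
    have "\<exists>m\<ge>m1. m \<in> {m \<in> {k..}. QQ m = QQ m0}" using m0(2) unfolding infinite_nat_iff_unbounded_le by blast
    then obtain m where m: "m1 \<le> m" "k \<le> m" "QQ m = QQ m0" by auto
    obtain Q' where Q': "Q' \<in> Lev m1" "PP m \<subseteq> Q'" using upper[OF m(1)] PP[OF m(2)] by blast
    have "PP m \<in> Lev m" "PP m \<subseteq> QQ m0" "QQ m0 \<in> Lev k" using PP[OF m(2)] QQ[OF m(2)] m(3) by auto
    then have "Q' \<subseteq> QQ m0" using coherent[OF m1 m(1) _ Q'(1) _ Q'(2)] by blast
    then show "\<exists>P\<in>Lev m1. P \<subseteq> QQ m0" using Q'(1) by blast
  qed
  moreover have "PP m0 \<in> Lev m0" "PP m0 \<subseteq> QQ m0" "PP m0 \<subseteq> S" using PP QQ m0(1) by auto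
  ultimately show ?thesis using m0(1) by blast
qed

lemma thread:
  assumes nonempty: "\<And>n. Lev n \<noteq> {}"
  obtains T where "\<And>n. T n \<in> Lev n" "\<And>n. T (Suc n) \<subseteq> T n"
proof -
  have "\<forall>m\<ge>0. \<exists>P\<in>Lev m. P \<subseteq> UNIV" using nonempty by blast
  then have "\<exists>Q. extendable 0 Q" using ex_extendable_below by blast
  moreover have "\<exists>Q'. extendable (Suc n) Q' \<and> Q' \<subseteq> Q" if "extendable n Q" for n Q
  proof -
    have "\<forall>m\<ge>Suc n. \<exists>P\<in>Lev m. P \<subseteq> Q" using that unfolding extendable_def by auto
    from ex_extendable_below[OF this] obtain Q' m P
      where "extendable (Suc n) Q'" "Suc n \<le> m" "P \<in> Lev m" "P \<subseteq> Q'" "P \<subseteq> Q" by blast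
    moreover have "Q \<in> Lev n" using that unfolding extendable_def by blast
    ultimately show ?thesis using coherent[of n "Suc n" m P Q' Q] unfolding extendable_def by auto
  qed
  ultimately obtain T where "\<And>n. extendable n (T n) \<and> T (Suc n) \<subseteq> T n"
    using dependent_nat_choice[of extendable "\<lambda>_ Q Q'. Q' \<subseteq> Q"] by blast
  then show thesis using that unfolding extendable_def by blast
qed

end

section \<open>Isomorphisms of profinite completions from threads of relations\<close>

lemma carrier_profinite_completion_iff:
  "x \<in> carrier (profinite_completion K) \<longleftrightarrow>
     x \<in> (\<Pi>\<^sub>E N\<in>fin_index_normals K. rcosets\<^bsub>K\<^esub> N) \<and>
     (\<forall>N\<in>fin_index_normals K. \<forall>M\<in>fin_index_normals K. M \<subseteq> N \<longrightarrow> x M \<subseteq> x N)"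
  by (simp add: profinite_completion_def carrier_FactGroup_eq_rcosets)

lemma carrier_profinite_completion_subset:
  "carrier (profinite_completion K) \<subseteq> (\<Pi>\<^sub>E N\<in>fin_index_normals K. rcosets\<^bsub>K\<^esub> N)"
proof
  fix x assume "x \<in> carrier (profinite_completion K)"
  then show "x \<in> (\<Pi>\<^sub>E N\<in>fin_index_normals K. rcosets\<^bsub>K\<^esub> N)" by (simp add: carrier_profinite_completion_iff)
qed

lemma profinite_completion_rcosets:
  "x \<in> carrier (profinite_completion K) \<Longrightarrow> N \<in> fin_index_normals K \<Longrightarrow> x N \<in> rcosets\<^bsub>K\<^esub> N"
  by (auto simp: carrier_profinite_completion_iff PiE_iff)

lemma profinite_completion_mono:
  "x \<in> carrier (profinite_completion K) \<Longrightarrow> N \<in> fin_index_normals K \<Longrightarrow>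
    M \<in> fin_index_normals K \<Longrightarrow> M \<subseteq> N \<Longrightarrow> x M \<subseteq> x N"
  by (auto simp: carrier_profinite_completion_iff)

lemma mult_profinite_completion:
  "x \<otimes>\<^bsub>profinite_completion K\<^esub> y = (\<lambda>N\<in>fin_index_normals K. x N <#>\<^bsub>K\<^esub> y N)"
  by (simp add: profinite_completion_def)

lemma topspace_profinite_topology: "topspace (profinite_topology K) = carrier (profinite_completion K)"
  unfolding profinite_topology_def topspace_subtopology topspace_product_topology topspace_discrete_topology
    carrier_FactGroup_eq_rcosets
  by (rule Int_absorb1[OF carrier_profinite_completion_subset])

lemma (in group) rcosets_eq_rcos_mem:
  assumes "subgroup U G" "C \<in> rcosets U" "a \<in> C"
  shows "C = U #> a" "a \<in> carrier G"
proof -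
  obtain g where g: "g \<in> carrier G" "C = U #> g" using assms(2) unfolding RCOSETS_def by blast
  show "C = U #> a" using repr_independence[OF _ g(1) assms(1)] assms(3) g(2) by simp
  show "a \<in> carrier G" using subgroup.elemrcos_carrier[OF assms(1) is_group g(1)] assms(3) g(2) by simp
qed

lemma (in group) rcosets_mem_div:
  assumes "subgroup U G" "C \<in> rcosets U" "a \<in> C" "a' \<in> C"
  shows "a' \<otimes> inv a \<in> U"
proof -
  have "U #> a' = U #> a" using rcosets_eq_rcos_mem(1)[OF assms(1,2)] assms(3,4) by metis
  then show ?thesis using rcos_eq_iff[OF assms(1)] rcosets_eq_rcos_mem(2)[OF assms(1,2)] assms(3,4) by blast
qed

lemma (in group) profinite_completion_mult_closed:
  assumes "x \<in> carrier (profinite_completion G)" "y \<in> carrier (profinite_completion G)"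
  shows "x \<otimes>\<^bsub>profinite_completion G\<^esub> y \<in> carrier (profinite_completion G)"
proof -
  have "x N <#> y N \<in> rcosets N" if N: "N \<in> fin_index_normals G" for N
  proof -
    have nN: "N \<lhd> G" using N by (simp add: fin_index_normals_iff)
    obtain g where g: "g \<in> carrier G" "x N = N #> g"
      using profinite_completion_rcosets[OF assms(1) N] unfolding RCOSETS_def by blast
    obtain h where h: "h \<in> carrier G" "y N = N #> h"
      using profinite_completion_rcosets[OF assms(2) N] unfolding RCOSETS_def by blast
    have "x N <#> y N = N #> (g \<otimes> h)" using normal.rcos_sum[OF nN g(1) h(1)] g(2) h(2) by simp
    then show ?thesis using rcosetsI[OF subgroup.subset[OF normal_imp_subgroup[OF nN]]] g(1) h(1) by simp
  qed
  then have "(\<lambda>N\<in>fin_index_normals G. x N <#> y N) \<in> (\<Pi>\<^sub>E N\<in>fin_index_normals G. rcosets N)"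
    by (simp add: restrict_PiE_iff)
  moreover have "x M <#> y M \<subseteq> x N <#> y N"
    if "N \<in> fin_index_normals G" "M \<in> fin_index_normals G" "M \<subseteq> N" for N M
    using profinite_completion_mono[OF assms(1) that] profinite_completion_mono[OF assms(2) that]
    by (rule mono_set_mult)
  ultimately show ?thesis unfolding carrier_profinite_completion_iff mult_profinite_completion by simp
qed

text \<open>The \<open>M\<close>-component of the image of \<open>x\<close> is the coset of any \<open>b\<close> related by \<open>Rs k\<close> to an
  element of the \<open>Inter_index_le K1 k\<close>-component of \<open>x\<close>, where \<open>k\<close> is the index of \<open>M\<close>, so that
  \<open>Inter_index_le K2 k \<subseteq> M\<close>.\<close>
definition thread_map ::
    "('a, 'c) monoid_scheme \<Rightarrow> ('b, 'd) monoid_scheme \<Rightarrow> (nat \<Rightarrow> ('a \<times> 'b) set) \<Rightarrow> ('a set \<Rightarrow> 'a set) \<Rightarrow> 'b set \<Rightarrow> 'b set"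
  where "thread_map K1 K2 Rs x = (\<lambda>M\<in>fin_index_normals K2.
    M #>\<^bsub>K2\<^esub> snd (SOME p. p \<in> Rs (index K2 M) \<and> fst p \<in> x (Inter_index_le K1 (index K2 M))))"

locale rel_thread = K1: group K1 + K2: group K2
  for K1 :: "('a, 'c) monoid_scheme" and K2 :: "('b, 'd) monoid_scheme" +
  fixes Rs :: "nat \<Rightarrow> ('a \<times> 'b) set"
  assumes finite_index_le1: "\<And>n. finite {N \<in> fin_index_normals K1. index K1 N \<le> n}"
    and finite_index_le2: "\<And>n. finite {N \<in> fin_index_normals K2. index K2 N \<le> n}"
    and rel: "\<And>n. quot_iso_rel K1 K2 (Inter_index_le K1 n) (Inter_index_le K2 n) (Rs n)"
    and decreasing: "\<And>n. Rs (Suc n) \<subseteq> Rs n"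
begin

abbreviation "U1 \<equiv> Inter_index_le K1"
abbreviation "U2 \<equiv> Inter_index_le K2"
abbreviation "f \<equiv> thread_map K1 K2 Rs"

lemma U1_normal: "U1 n \<in> fin_index_normals K1"
  by (rule K1.Inter_index_le_in_fin_index_normals[OF finite_index_le1])

lemma U2_normal: "U2 n \<in> fin_index_normals K2"
  by (rule K2.Inter_index_le_in_fin_index_normals[OF finite_index_le2])

lemma U1_subgroup: "subgroup (U1 n) K1"
  using U1_normal by (simp add: fin_index_normals_iff normal_imp_subgroup)

lemma U2_subgroup: "subgroup (U2 n) K2"
  using U2_normal by (simp add: fin_index_normals_iff normal_imp_subgroup)

lemma Rs_antimono: "n \<le> m \<Longrightarrow> Rs m \<subseteq> Rs n"
  by (induction rule: dec_induct) (use decreasing in blast)+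

lemma rel_carrierD: "(a, b) \<in> Rs n \<Longrightarrow> a \<in> carrier K1" "(a, b) \<in> Rs n \<Longrightarrow> b \<in> carrier K2"
  using quot_iso_rel.rel_carrierD[OF rel] by auto

lemma ex_rel_in_component:
  assumes "x \<in> carrier (profinite_completion K1)"
  obtains a b where "(a, b) \<in> Rs n" "a \<in> x (U1 n)"
proof -
  obtain a where "a \<in> x (U1 n)"
    using subgroup.rcosets_non_empty[OF U1_subgroup profinite_completion_rcosets[OF assms U1_normal]] by blast
  moreover have "a \<in> carrier K1"
    using K1.rcosets_eq_rcos_mem(2)[OF U1_subgroup profinite_completion_rcosets[OF assms U1_normal] \<open>a \<in> x (U1 n)\<close>] .
  ultimately show ?thesis using that quot_iso_rel.ex_rel_right[OF rel] by blast
qed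

lemma rel_component_rcos_eq:
  assumes "x \<in> carrier (profinite_completion K1)" "U2 n \<subseteq> M" "subgroup M K2"
    and "(a, b) \<in> Rs n" "(a', b') \<in> Rs n" "a \<in> x (U1 n)" "a' \<in> x (U1 n)"
  shows "M #>\<^bsub>K2\<^esub> b = M #>\<^bsub>K2\<^esub> b'"
proof -
  have "a' \<otimes>\<^bsub>K1\<^esub> inv\<^bsub>K1\<^esub> a \<in> U1 n"
    by (rule K1.rcosets_mem_div[OF U1_subgroup profinite_completion_rcosets[OF assms(1) U1_normal] assms(6,7)])
  then have "b' \<otimes>\<^bsub>K2\<^esub> inv\<^bsub>K2\<^esub> b \<in> M" using quot_iso_rel.rel_div_mem_iff[OF rel assms(5,4)] assms(2) by blast
  then show ?thesis using K2.rcos_eq_iff[OF assms(3)] rel_carrierD(2) assms(4,5) by metis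
qed

lemma thread_map_eq:
  assumes x: "x \<in> carrier (profinite_completion K1)" and M: "M \<in> fin_index_normals K2"
    and "U2 n \<subseteq> M" "(a, b) \<in> Rs n" "a \<in> x (U1 n)"
  shows "f x M = M #>\<^bsub>K2\<^esub> b"
proof -
  let ?k = "index K2 M"
  let ?p = "SOME p. p \<in> Rs ?k \<and> fst p \<in> x (U1 ?k)"
  have M': "subgroup M K2" using M by (simp add: fin_index_normals_iff normal_imp_subgroup)
  have "\<exists>p. p \<in> Rs ?k \<and> fst p \<in> x (U1 ?k)" using ex_rel_in_component[OF x, of ?k] by (metis fst_conv)
  then have p: "?p \<in> Rs ?k \<and> fst ?p \<in> x (U1 ?k)" by (rule someI_ex)
  have fx: "f x M = M #>\<^bsub>K2\<^esub> snd ?p" unfolding thread_map_def using M by simp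
  have kM: "U2 ?k \<subseteq> M" by (rule Inter_index_le_subset[OF M order.refl])
  let ?m = "max n ?k"
  obtain a1 b1 where ab1: "(a1, b1) \<in> Rs ?m" "a1 \<in> x (U1 ?m)" using ex_rel_in_component[OF x] by blast
  have "(a1, b1) \<in> Rs n" "(a1, b1) \<in> Rs ?k" using Rs_antimono[of n ?m] Rs_antimono[of ?k ?m] ab1(1) by auto
  moreover have "a1 \<in> x (U1 n)" "a1 \<in> x (U1 ?k)"
    using profinite_completion_mono[OF x U1_normal U1_normal Inter_index_le_antimono[of n ?m]]
      profinite_completion_mono[OF x U1_normal U1_normal Inter_index_le_antimono[of ?k ?m]] ab1(2) by auto
  ultimately have "M #>\<^bsub>K2\<^esub> b = M #>\<^bsub>K2\<^esub> b1" "M #>\<^bsub>K2\<^esub> snd ?p = M #>\<^bsub>K2\<^esub> b1"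
    using rel_component_rcos_eq[OF x assms(3) M' assms(4) _ assms(5)]
      rel_component_rcos_eq[OF x kM M', of "fst ?p" "snd ?p"] p by auto
  then show ?thesis using fx by simp
qed

lemma thread_map_eq_index:
  assumes "x \<in> carrier (profinite_completion K1)" "M \<in> fin_index_normals K2"
  obtains b where "f x M = M #>\<^bsub>K2\<^esub> b" "b \<in> carrier K2"
proof -
  obtain a b where "(a, b) \<in> Rs (index K2 M)" "a \<in> x (U1 (index K2 M))"
    using ex_rel_in_component[OF assms(1)] .
  then show ?thesis
    using that thread_map_eq[OF assms Inter_index_le_subset[OF assms(2) order.refl]] rel_carrierD(2) by blast
qed

lemma thread_map_in_carrier:
  assumes x: "x \<in> carrier (profinite_completion K1)"
  shows "f x \<in> carrier (profinite_completion K2)"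
proof -
  have "f x M \<in> rcosets\<^bsub>K2\<^esub> M" if M: "M \<in> fin_index_normals K2" for M
  proof -
    obtain b where "f x M = M #>\<^bsub>K2\<^esub> b" "b \<in> carrier K2" using thread_map_eq_index[OF x M] .
    moreover have "M \<subseteq> carrier K2" using M by (simp add: fin_index_normals_iff normal_imp_subgroup subgroup.subset)
    ultimately show ?thesis using K2.rcosetsI by simp
  qed
  moreover have "f x \<in> extensional (fin_index_normals K2)" unfolding thread_map_def by simp
  moreover have "f x M \<subseteq> f x N"
    if N: "N \<in> fin_index_normals K2" and M: "M \<in> fin_index_normals K2" and MN: "M \<subseteq> N" for N M
  proof -
    obtain a b where ab: "(a, b) \<in> Rs (index K2 M)" "a \<in> x (U1 (index K2 M))" using ex_rel_in_component[OF x] .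
    have kM: "U2 (index K2 M) \<subseteq> M" by (rule Inter_index_le_subset[OF M order.refl])
    have "f x M = M #>\<^bsub>K2\<^esub> b" by (rule thread_map_eq[OF x M kM ab])
    moreover have "f x N = N #>\<^bsub>K2\<^esub> b" using thread_map_eq[OF x N _ ab] kM MN by blast
    ultimately show ?thesis using MN unfolding r_coset_def by auto
  qed
  ultimately show ?thesis unfolding carrier_profinite_completion_iff by (simp add: PiE_iff)
qed

lemma thread_map_mult:
  assumes x: "x \<in> carrier (profinite_completion K1)" and y: "y \<in> carrier (profinite_completion K1)"
  shows "f (x \<otimes>\<^bsub>profinite_completion K1\<^esub> y) = f x \<otimes>\<^bsub>profinite_completion K2\<^esub> f y"
proof
  fix M
  show "f (x \<otimes>\<^bsub>profinite_completion K1\<^esub> y) M = (f x \<otimes>\<^bsub>profinite_completion K2\<^esub> f y) M"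
  proof (cases "M \<in> fin_index_normals K2")
    case False
    then show ?thesis unfolding thread_map_def mult_profinite_completion by simp
  next
    case M: True
    let ?k = "index K2 M"
    have kM: "U2 ?k \<subseteq> M" by (rule Inter_index_le_subset[OF M order.refl])
    obtain a b where ab: "(a, b) \<in> Rs ?k" "a \<in> x (U1 ?k)" using ex_rel_in_component[OF x] .
    obtain a' b' where ab': "(a', b') \<in> Rs ?k" "a' \<in> y (U1 ?k)" using ex_rel_in_component[OF y] .
    have "a \<otimes>\<^bsub>K1\<^esub> a' \<in> (x \<otimes>\<^bsub>profinite_completion K1\<^esub> y) (U1 ?k)"
      using ab(2) ab'(2) U1_normal unfolding mult_profinite_completion set_mult_def by auto
    then have "f (x \<otimes>\<^bsub>profinite_completion K1\<^esub> y) M = M #>\<^bsub>K2\<^esub> (b \<otimes>\<^bsub>K2\<^esub> b')"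
      using thread_map_eq[OF K1.profinite_completion_mult_closed[OF x y] M kM
          quot_iso_rel.rel_mult[OF rel ab(1) ab'(1)]] by blast
    moreover have "f x M = M #>\<^bsub>K2\<^esub> b" "f y M = M #>\<^bsub>K2\<^esub> b'"
      using thread_map_eq[OF x M kM ab] thread_map_eq[OF y M kM ab'] by auto
    ultimately show ?thesis
      using M normal.rcos_sum[of M K2 b b'] rel_carrierD(2) ab(1) ab'(1)
      unfolding mult_profinite_completion by (simp add: fin_index_normals_iff)
  qed
qed

lemma continuous_map_thread_map:
  "continuous_map (profinite_topology K1) (profinite_topology K2) f"
proof -
  let ?P1 = "product_topology (\<lambda>N. discrete_topology (carrier (K1 Mod N))) (fin_index_normals K1)"
  let ?P2 = "product_topology (\<lambda>N. discrete_topology (carrier (K2 Mod N))) (fin_index_normals K2)"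
  let ?T1 = "subtopology ?P1 (carrier (profinite_completion K1))"
  have "continuous_map ?T1 (discrete_topology (carrier (K2 Mod M))) (\<lambda>x. f x M)"
    if M: "M \<in> fin_index_normals K2" for M
  proof -
    let ?k = "index K2 M"
    define h where "h C = M #>\<^bsub>K2\<^esub> snd (SOME p. p \<in> Rs ?k \<and> fst p \<in> C)" for C
    have "(\<lambda>x. f x M) = h \<circ> (\<lambda>x. x (U1 ?k))" unfolding thread_map_def h_def using M by (simp add: o_def)
    moreover have "continuous_map ?T1 (discrete_topology (carrier (K1 Mod U1 ?k))) (\<lambda>x. x (U1 ?k))"
      by (rule continuous_map_from_subtopology[OF continuous_map_product_projection[OF U1_normal]])
    moreover have "h C \<in> carrier (K2 Mod M)" if C: "C \<in> carrier (K1 Mod U1 ?k)" for C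
    proof -
      obtain a where a: "a \<in> C" "a \<in> carrier K1"
        using C subgroup.rcosets_non_empty[OF U1_subgroup] K1.rcosets_eq_rcos_mem(2)[OF U1_subgroup]
        unfolding carrier_FactGroup_eq_rcosets by (metis ex_in_conv)
      obtain b where "(a, b) \<in> Rs ?k" using quot_iso_rel.ex_rel_right[OF rel a(2)] by blast
      then have "\<exists>p. p \<in> Rs ?k \<and> fst p \<in> C" using a(1) by (metis fst_conv)
      then have "(SOME p. p \<in> Rs ?k \<and> fst p \<in> C) \<in> Rs ?k" by (metis (mono_tags, lifting) someI_ex)
      then have "snd (SOME p. p \<in> Rs ?k \<and> fst p \<in> C) \<in> carrier K2" using rel_carrierD(2) by (metis prod.collapse)
      moreover have "M \<subseteq> carrier K2" using M by (simp add: fin_index_normals_iff normal_imp_subgroup subgroup.subset)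
      ultimately show ?thesis unfolding h_def carrier_FactGroup_eq_rcosets using K2.rcosetsI by simp
    qed
    then have "continuous_map (discrete_topology (carrier (K1 Mod U1 ?k))) (discrete_topology (carrier (K2 Mod M))) h"
      unfolding continuous_map_from_discrete_topology by auto
    ultimately show ?thesis using continuous_map_compose by metis
  qed
  moreover have "f ` topspace ?T1 \<subseteq> extensional (fin_index_normals K2)" unfolding thread_map_def by auto
  ultimately have "continuous_map ?T1 ?P2 f" unfolding continuous_map_componentwise by blast
  moreover have "f \<in> topspace ?T1 \<rightarrow> carrier (profinite_completion K2)"
    using thread_map_in_carrier topspace_profinite_topology[of K1] unfolding profinite_topology_def by auto
  ultimately show ?thesis unfolding profinite_topology_def continuous_map_in_subtopology by blast
qed

lemma rel_thread_converse: "rel_thread K2 K1 (\<lambda>n. (Rs n)\<inverse>)"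
  by (intro rel_thread.intro rel_thread_axioms.intro K1.is_group K2.is_group finite_index_le1 finite_index_le2
      quot_iso_rel.quot_iso_rel_converse[OF rel]) (use decreasing in auto)

lemma thread_map_converse_inverse:
  assumes x: "x \<in> carrier (profinite_completion K1)"
  shows "thread_map K2 K1 (\<lambda>n. (Rs n)\<inverse>) (f x) = x"
proof
  interpret conv: rel_thread K2 K1 "\<lambda>n. (Rs n)\<inverse>" by (rule rel_thread_converse)
  fix N
  show "thread_map K2 K1 (\<lambda>n. (Rs n)\<inverse>) (f x) N = x N"
  proof (cases "N \<in> fin_index_normals K1")
    case False
    then have "x N = undefined" using x carrier_profinite_completion_subset by (auto simp: PiE_iff extensional_def)
    then show ?thesis using False unfolding thread_map_def by simp
  next
    case N: True
    let ?j = "index K1 N"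
    have jN: "U1 ?j \<subseteq> N" by (rule Inter_index_le_subset[OF N order.refl])
    obtain a b where ab: "(a, b) \<in> Rs ?j" "a \<in> x (U1 ?j)" using ex_rel_in_component[OF x] .
    have "f x (U2 ?j) = U2 ?j #>\<^bsub>K2\<^esub> b" by (rule thread_map_eq[OF x U2_normal order.refl ab])
    then have "b \<in> f x (U2 ?j)" using K2.rcos_self[OF rel_carrierD(2)[OF ab(1)] U2_subgroup] by simp
    then have "thread_map K2 K1 (\<lambda>n. (Rs n)\<inverse>) (f x) N = N #>\<^bsub>K1\<^esub> a"
      using conv.thread_map_eq[OF thread_map_in_carrier[OF x] N jN] ab(1) by simp
    moreover have "a \<in> x N" using profinite_completion_mono[OF x N U1_normal jN] ab(2) by blast
    then have "x N = N #>\<^bsub>K1\<^esub> a"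
      using K1.rcosets_eq_rcos_mem(1)[OF _ profinite_completion_rcosets[OF x N]] N
      by (simp add: fin_index_normals_iff normal_imp_subgroup)
    ultimately show ?thesis by simp
  qed
qed

theorem profinite_completions_iso: "profinite_completions_iso K1 K2"
proof -
  interpret conv: rel_thread K2 K1 "\<lambda>n. (Rs n)\<inverse>" by (rule rel_thread_converse)
  let ?g = "thread_map K2 K1 (\<lambda>n. (Rs n)\<inverse>)"
  have gf: "\<And>x. x \<in> carrier (profinite_completion K1) \<Longrightarrow> ?g (f x) = x"
    by (rule thread_map_converse_inverse)
  have fg: "\<And>y. y \<in> carrier (profinite_completion K2) \<Longrightarrow> f (?g y) = y"
    using conv.thread_map_converse_inverse by simp
  have "f \<in> iso (profinite_completion K1) (profinite_completion K2)"
    unfolding iso_def hom_def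
    using thread_map_in_carrier thread_map_mult conv.thread_map_in_carrier gf fg
    by (auto intro!: bij_betw_byWitness[where f' = ?g])
  moreover have "homeomorphic_map (profinite_topology K1) (profinite_topology K2) f"
    unfolding homeomorphic_map_maps homeomorphic_maps_def topspace_profinite_topology
    using continuous_map_thread_map conv.continuous_map_thread_map gf fg by blast
  ultimately show ?thesis unfolding profinite_completions_iso_def by blast
qed

end

lemma inverse_system_quot_iso_rels:
  assumes "group K1" "group K2"
    and finite_index_le1: "\<And>n. finite {N \<in> fin_index_normals K1. index K1 N \<le> n}"
    and finite_index_le2: "\<And>n. finite {N \<in> fin_index_normals K2. index K2 N \<le> n}"
  shows "inverse_system (\<lambda>n. {R. quot_iso_rel K1 K2 (Inter_index_le K1 n) (Inter_index_le K2 n) R})"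
proof -
  interpret K1: group K1 by fact
  interpret K2: group K2 by fact
  let ?U1 = "Inter_index_le K1" and ?U2 = "Inter_index_le K2"
  have U1: "?U1 n \<lhd> K1" "finite (rcosets\<^bsub>K1\<^esub> (?U1 n))" for n
    using K1.Inter_index_le_in_fin_index_normals[OF finite_index_le1] by (auto simp: fin_index_normals_iff)
  have U2: "?U2 n \<lhd> K2" "finite (rcosets\<^bsub>K2\<^esub> (?U2 n))" for n
    using K2.Inter_index_le_in_fin_index_normals[OF finite_index_le2] by (auto simp: fin_index_normals_iff)
  show ?thesis
  proof
    show "finite {R. quot_iso_rel K1 K2 (?U1 n) (?U2 n) R}" for n
      by (rule finite_quot_iso_rels[OF assms(1,2) normal_imp_subgroup[OF U1(1)]
          normal_imp_subgroup[OF U2(1)] U1(2) U2(2)])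
    show "\<exists>Q\<in>{R. quot_iso_rel K1 K2 (?U1 n) (?U2 n) R}. P \<subseteq> Q"
      if "n \<le> m" "P \<in> {R. quot_iso_rel K1 K2 (?U1 m) (?U2 m) R}" for n m P
    proof -
      interpret quot_iso_rel K1 K2 "?U1 m" "?U2 m" P using that(2) by simp
      have "a \<in> ?U1 n \<longleftrightarrow> b \<in> ?U2 n" if "(a, b) \<in> P" for a b
        by (rule rel_Inter_index_le_iff[OF Inter_index_le_antimono[OF \<open>n \<le> m\<close>]
              Inter_index_le_antimono[OF \<open>n \<le> m\<close>] that])
      then have "quot_iso_rel K1 K2 (?U1 n) (?U2 n) (coarsen_rel K1 K2 (?U1 n) (?U2 n) P)"
        by (rule quot_iso_rel_coarsen_rel[OF U1(1) U2(1)])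
      moreover have "P \<subseteq> coarsen_rel K1 K2 (?U1 n) (?U2 n) P"
        by (rule subset_coarsen_rel[OF normal_imp_subgroup[OF U1(1)] normal_imp_subgroup[OF U2(1)]])
      ultimately show ?thesis by (intro bexI[of _ "coarsen_rel K1 K2 (?U1 n) (?U2 n) P"]) simp_all
    qed
    show "Q \<subseteq> Q'"
      if "n \<le> m" "m \<le> p" "P \<in> {R. quot_iso_rel K1 K2 (?U1 p) (?U2 p) R}"
        "Q \<in> {R. quot_iso_rel K1 K2 (?U1 m) (?U2 m) R}" "Q' \<in> {R. quot_iso_rel K1 K2 (?U1 n) (?U2 n) R}"
        "P \<subseteq> Q" "P \<subseteq> Q'"
      for n m p P Q Q'
    proof -
      have P: "quot_iso_rel K1 K2 (?U1 p) (?U2 p) P" and Q: "quot_iso_rel K1 K2 (?U1 m) (?U2 m) Q"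
        and Q': "quot_iso_rel K1 K2 (?U1 n) (?U2 n) Q'" using that(3-5) by simp_all
      show ?thesis
        by (rule quot_iso_rel.rel_subset_if_common_subrel[OF Q Q' Inter_index_le_antimono[OF that(1)]
              that(6,7) quot_iso_rel.fst_rel[OF P]])
    qed
  qed
qed

theorem profinite_completions_iso_if_quot_iso_rels:
  assumes "group K1" "group K2"
    and "\<And>n. finite {N \<in> fin_index_normals K1. index K1 N \<le> n}"
    and "\<And>n. finite {N \<in> fin_index_normals K2. index K2 N \<le> n}"
    and ex_rel: "\<And>n. \<exists>R. quot_iso_rel K1 K2 (Inter_index_le K1 n) (Inter_index_le K2 n) R"
  shows "profinite_completions_iso K1 K2"
proof -
  interpret Lev: inverse_system "\<lambda>n. {R. quot_iso_rel K1 K2 (Inter_index_le K1 n) (Inter_index_le K2 n) R}"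
    by (rule inverse_system_quot_iso_rels[OF assms(1-4)])
  have "{R. quot_iso_rel K1 K2 (Inter_index_le K1 n) (Inter_index_le K2 n) R} \<noteq> {}" for n
    using ex_rel[of n] by blast
  then obtain T where "\<And>n. T n \<in> {R. quot_iso_rel K1 K2 (Inter_index_le K1 n) (Inter_index_le K2 n) R}"
    and "\<And>n. T (Suc n) \<subseteq> T n"
    by (rule Lev.thread) blast
  then have "rel_thread K1 K2 T" by (intro rel_thread.intro rel_thread_axioms.intro assms) simp_all
  then show ?thesis by (rule rel_thread.profinite_completions_iso)
qed

section \<open>Finite quotients and lifted isomorphisms\<close>

lemma (in group) hom_eq_if_rcos_eq:
  assumes "group G'" "\<phi> \<in> hom G G'" "subgroup C G" "C \<subseteq> kernel G G' \<phi>"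
    and xy: "x \<in> carrier G" "y \<in> carrier G" "C #> x = C #> y"
  shows "\<phi> x = \<phi> y"
proof -
  interpret \<phi>: group_hom G G' \<phi> using assms(1,2) by (simp add: group_hom_def group_hom_axioms_def is_group)
  have "\<phi> (x \<otimes> inv y) = \<one>\<^bsub>G'\<^esub>"
    using rcos_eq_iff[OF assms(3) xy(1,2)] xy(3) assms(4) unfolding kernel_def by blast
  then have "\<phi> x \<otimes>\<^bsub>G'\<^esub> inv\<^bsub>G'\<^esub> \<phi> y = \<one>\<^bsub>G'\<^esub>" using xy(1,2) by simp
  then show ?thesis using \<phi>.H.inv_equality[where x = "inv\<^bsub>G'\<^esub> \<phi> y" and y = "\<phi> x"] xy(1,2) by simp
qed

lemma (in group) finite_quotient_factorization:
  assumes "C \<lhd> G" "finite (rcosets C)" "group G'" "\<phi> \<in> hom G G'" "C \<subseteq> kernel G G' \<phi>"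
  obtains H :: "nat monoid" and \<psi> \<theta> where "group H" "finite (carrier H)" "\<psi> \<in> hom G H" "\<theta> \<in> hom H G'"
    "\<And>x. x \<in> carrier G \<Longrightarrow> \<theta> (\<psi> x) = \<phi> x" "\<psi> ` carrier G = carrier H" "kernel G H \<psi> = C"
proof -
  interpret C: normal C G by fact
  interpret \<phi>: group_hom G G' \<phi> using assms(3,4) by (simp add: group_hom_def group_hom_axioms_def is_group)
  have Mod_group: "group (G Mod C)" by (rule C.factorgroup_is_group)
  obtain e :: "'a set \<Rightarrow> nat" where e_inj: "inj_on e (rcosets C)"
    using finite_imp_inj_to_nat_seg[OF assms(2)] by blast
  then have e: "inj_on e (carrier (G Mod C))" by (simp add: carrier_FactGroup_eq_rcosets)
  define H where "H = flatten (G Mod C) e"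
  define \<psi> where "\<psi> = e \<circ> (\<lambda>x. C #> x)"
  have carrier_H: "carrier H = e ` (rcosets C)" unfolding H_def flatten_def carrier_FactGroup_eq_rcosets by simp
  have e_iso: "e \<in> iso (G Mod C) H"
    using flatten_set_group_hom[OF Mod_group e] e carrier_H
    unfolding iso_def H_def by (simp add: carrier_FactGroup_eq_rcosets inj_on_imp_bij_betw)
  have \<psi>_hom: "\<psi> \<in> hom G H"
    unfolding \<psi>_def H_def by (rule Group.hom_compose[OF C.r_coset_hom_Mod flatten_set_group_hom[OF Mod_group e]])
  have "\<phi> x = \<phi> y" if "x \<in> carrier G" "y \<in> carrier G" "C #> x = C #> y" for x y
    by (rule hom_eq_if_rcos_eq[OF assms(3,4) C.subgroup_axioms assms(5) that])
  then obtain g where g: "g \<in> hom (G Mod C) G'" "\<And>x. x \<in> carrier G \<Longrightarrow> g (C #> x) = \<phi> x"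
    using FactGroup_universal[OF assms(4,1)] by blast
  define \<theta> where "\<theta> = g \<circ> inv_into (carrier (G Mod C)) e"
  have "inv_into (carrier (G Mod C)) e \<in> hom H (G Mod C)"
    using group.iso_set_sym[OF Mod_group e_iso] unfolding iso_def by blast
  then have \<theta>_hom: "\<theta> \<in> hom H G'" unfolding \<theta>_def by (rule Group.hom_compose[OF _ g(1)])
  have \<theta>_\<psi>: "\<theta> (\<psi> x) = \<phi> x" if "x \<in> carrier G" for x
    using g(2)[OF that] inv_into_f_f[OF e] rcosetsI[OF C.subset that]
    unfolding \<theta>_def \<psi>_def by (simp add: carrier_FactGroup_eq_rcosets)
  have \<psi>_onto: "\<psi> ` carrier G = carrier H" unfolding carrier_H \<psi>_def rcosets_eq_image by (simp add: image_comp)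
  have "kernel G H \<psi> = C"
  proof -
    have "\<one>\<^bsub>H\<^esub> = e C" unfolding H_def flatten_def by simp
    have "x \<in> kernel G H \<psi> \<longleftrightarrow> x \<in> C" if x: "x \<in> carrier G" for x
    proof -
      have "x \<in> kernel G H \<psi> \<longleftrightarrow> e (C #> x) = e C"
        using x \<open>\<one>\<^bsub>H\<^esub> = e C\<close> unfolding kernel_def \<psi>_def by simp
      also have "\<dots> \<longleftrightarrow> C #> x = C"
        using inj_on_eq_iff[OF e_inj rcosetsI[OF C.subset x] C.subgroup_in_rcosets[OF is_group]] .
      also have "\<dots> \<longleftrightarrow> x \<in> C"
        using coset_join1[OF _ x C.subgroup_axioms] coset_join2[OF x C.subgroup_axioms] by blast
      finally show ?thesis .
    qed
    then show ?thesis using C.subset unfolding kernel_def by blast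
  qed
  moreover have "finite (carrier H)" unfolding carrier_H using assms(2) by simp
  moreover have "group H" unfolding H_def by (rule flatten_set_group[OF Mod_group e])
  ultimately show thesis using that \<psi>_hom \<theta>_hom \<theta>_\<psi> \<psi>_onto by blast
qed

lemma (in group) iso_subgroupsD:
  assumes "subgroup T1 G" "subgroup T2 G" "f \<in> iso (G\<lparr>carrier := T1\<rparr>) (G\<lparr>carrier := T2\<rparr>)"
  shows "bij_betw f T1 T2" "f \<one> = \<one>"
    and "\<And>x y. x \<in> T1 \<Longrightarrow> y \<in> T1 \<Longrightarrow> f (x \<otimes> y) = f x \<otimes> f y"
    and "\<And>x. x \<in> T1 \<Longrightarrow> f (inv x) = inv (f x)"
proof -
  interpret f: group_hom "G\<lparr>carrier := T1\<rparr>" "G\<lparr>carrier := T2\<rparr>" f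
    using assms subgroup_imp_group by (simp add: group_hom_def group_hom_axioms_def iso_def)
  show bij: "bij_betw f T1 T2" using assms(3) by (simp add: iso_def)
  show "f \<one> = \<one>" using f.hom_one by simp
  show "f (x \<otimes> y) = f x \<otimes> f y" if "x \<in> T1" "y \<in> T1" for x y using f.hom_mult[of x y] that by simp
  show "f (inv x) = inv (f x)" if x: "x \<in> T1" for x
    using f.hom_inv[of x] x bij_betw_apply[OF bij x] m_inv_consistent[OF assms(1) x]
      m_inv_consistent[OF assms(2)] by simp
qed

lemma quot_iso_rel_lift_iso:
  assumes "group G" "group H" "\<psi> \<in> hom G H" "\<psi> ` carrier G = carrier H"
    and T1: "subgroup T1 H" and T2: "subgroup T2 H" and f: "f \<in> iso (H\<lparr>carrier := T1\<rparr>) (H\<lparr>carrier := T2\<rparr>)"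
  shows "quot_iso_rel (G\<lparr>carrier := {x \<in> carrier G. \<psi> x \<in> T1}\<rparr>) (G\<lparr>carrier := {x \<in> carrier G. \<psi> x \<in> T2}\<rparr>)
    (kernel G H \<psi>) (kernel G H \<psi>) {(a, b). a \<in> carrier G \<and> \<psi> a \<in> T1 \<and> b \<in> carrier G \<and> \<psi> b \<in> T2 \<and> f (\<psi> a) = \<psi> b}"
    (is "quot_iso_rel (G\<lparr>carrier := ?P1\<rparr>) (G\<lparr>carrier := ?P2\<rparr>) ?K ?K ?R")
proof -
  interpret \<psi>: group_hom G H \<psi> using assms(1-3) by (simp add: group_hom_def group_hom_axioms_def)
  note f_ops = \<psi>.H.iso_subgroupsD[OF T1 T2 f]
  have P1: "subgroup ?P1 G" and P2: "subgroup ?P2 G" using preimage_subgroup[OF assms(3,1,2)] T1 T2 by auto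
  have K: "subgroup ?K G" by (rule \<psi>.subgroup_kernel)
  have KP: "?K \<subseteq> ?P1" "?K \<subseteq> ?P2" using subgroup.one_closed[OF T1] subgroup.one_closed[OF T2]
    unfolding kernel_def by auto
  have f_T: "f h \<in> T2" if "h \<in> T1" for h using bij_betw_apply[OF f_ops(1) that] .
  have lift: "\<exists>a\<in>carrier G. \<psi> a = h" if "h \<in> carrier H" for h
    using that unfolding assms(4)[symmetric] by blast
  have "fst ` ?R = ?P1"
  proof (intro equalityI subsetI)
    fix a assume "a \<in> ?P1"
    moreover obtain b where "b \<in> carrier G" "\<psi> b = f (\<psi> a)"
      using lift f_T subgroup.subset[OF T2] \<open>a \<in> ?P1\<close> by blast
    ultimately show "a \<in> fst ` ?R" using f_T by (auto intro!: image_eqI[of a fst "(a, b)"])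
  qed auto
  moreover have "snd ` ?R = ?P2"
  proof (intro equalityI subsetI)
    fix b assume b: "b \<in> ?P2"
    then obtain h where h: "h \<in> T1" "f h = \<psi> b" using f_ops(1) unfolding bij_betw_def by force
    moreover obtain a where "a \<in> carrier G" "\<psi> a = h" using lift subgroup.subset[OF T1] h(1) by blast
    ultimately show "b \<in> snd ` ?R" using b by (auto intro!: image_eqI[of b snd "(a, b)"])
  qed auto
  moreover have "a \<in> ?K \<longleftrightarrow> b \<in> ?K" if "(a, b) \<in> ?R" for a b
  proof -
    have "a \<in> ?K \<longleftrightarrow> f (\<psi> a) = f \<one>\<^bsub>H\<^esub>"
      using that f_ops(2) inj_on_eq_iff[OF bij_betw_imp_inj_on[OF f_ops(1)] _ subgroup.one_closed[OF T1]]
      unfolding kernel_def by auto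
    then show ?thesis using that f_ops(2) unfolding kernel_def by auto
  qed
  moreover have "?K \<times> ?K \<subseteq> ?R" using KP f_ops(2) unfolding kernel_def by auto
  moreover have "(a \<otimes>\<^bsub>G\<^esub> a', b \<otimes>\<^bsub>G\<^esub> b') \<in> ?R" if "(a, b) \<in> ?R" "(a', b') \<in> ?R" for a b a' b'
    using that f_ops(3) subgroup.m_closed[OF T1] subgroup.m_closed[OF T2] by auto
  moreover have "(inv\<^bsub>G\<^esub> a, inv\<^bsub>G\<^esub> b) \<in> ?R" if "(a, b) \<in> ?R" for a b
    using that f_ops(4) subgroup.m_inv_closed[OF T1] subgroup.m_inv_closed[OF T2] by auto
  ultimately show ?thesis
    using \<psi>.G.m_inv_consistent[OF P1] \<psi>.G.m_inv_consistent[OF P2]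
    by (intro quot_iso_rel.intro quot_iso_rel_axioms.intro \<psi>.G.subgroup_imp_group P1 P2
        \<psi>.G.subgroup_incl[OF K P1 KP(1)] \<psi>.G.subgroup_incl[OF K P2 KP(2)]) auto
qed

section \<open>Preimages of subgroups of a finite quotient of a finitely generated group\<close>

locale fg_hom_to_finite = \<Gamma>: group \<Gamma> + G: group G
  for \<Gamma> :: "('a, 'c) monoid_scheme" and G :: "('b, 'd) monoid_scheme" +
  fixes \<phi> :: "'a \<Rightarrow> 'b"
  assumes finitely_generated: "finitely_generated_group \<Gamma>" and finite_G: "finite (carrier G)"
    and hom: "\<phi> \<in> hom \<Gamma> G"
begin

abbreviation pre :: "'b set \<Rightarrow> 'a set" where "pre S \<equiv> {x \<in> carrier \<Gamma>. \<phi> x \<in> S}"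

lemma subgroup_pre: "subgroup S G \<Longrightarrow> subgroup (pre S) \<Gamma>"
  by (rule preimage_subgroup[OF hom \<Gamma>.is_group G.is_group])

lemma finite_rcosets_pre: "subgroup S G \<Longrightarrow> finite (rcosets\<^bsub>\<Gamma>\<^esub> (pre S))"
  using finite_rcosets_preimage[OF hom \<Gamma>.is_group G.is_group] finite_subset[OF _ finite_G] hom
  unfolding hom_def by blast

lemma group_pre: "subgroup S G \<Longrightarrow> group (\<Gamma>\<lparr>carrier := pre S\<rparr>)"
  by (rule \<Gamma>.subgroup_imp_group[OF subgroup_pre])

lemma subgroup_of_pre:
  assumes "subgroup S G" "subgroup N (\<Gamma>\<lparr>carrier := pre S\<rparr>)" "finite (rcosets\<^bsub>\<Gamma>\<lparr>carrier := pre S\<rparr>\<^esub> N)"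
  shows "subgroup N \<Gamma>" "finite (rcosets\<^bsub>\<Gamma>\<^esub> N)"
    and "card (rcosets\<^bsub>\<Gamma>\<^esub> N) \<le> index (\<Gamma>\<lparr>carrier := pre S\<rparr>) N * card (rcosets\<^bsub>\<Gamma>\<^esub> (pre S))"
proof -
  show N: "subgroup N \<Gamma>" by (rule \<Gamma>.incl_subgroup[OF subgroup_pre[OF assms(1)] assms(2)])
  have "N \<subseteq> pre S" using subgroup.subset[OF assms(2)] by simp
  from \<Gamma>.finite_rcosets_tower[OF subgroup_pre[OF assms(1)] N this assms(3) finite_rcosets_pre[OF assms(1)]]
  show "finite (rcosets\<^bsub>\<Gamma>\<^esub> N)"
    and "card (rcosets\<^bsub>\<Gamma>\<^esub> N) \<le> index (\<Gamma>\<lparr>carrier := pre S\<rparr>) N * card (rcosets\<^bsub>\<Gamma>\<^esub> (pre S))"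
    unfolding index_def by auto
qed

lemma finite_normals_index_le_pre:
  assumes "subgroup S G"
  shows "finite {N \<in> fin_index_normals (\<Gamma>\<lparr>carrier := pre S\<rparr>). index (\<Gamma>\<lparr>carrier := pre S\<rparr>) N \<le> n}"
proof -
  let ?d = "card (rcosets\<^bsub>\<Gamma>\<^esub> (pre S))"
  have "{N \<in> fin_index_normals (\<Gamma>\<lparr>carrier := pre S\<rparr>). index (\<Gamma>\<lparr>carrier := pre S\<rparr>) N \<le> n} \<subseteq>
    {U. subgroup U \<Gamma> \<and> finite (rcosets\<^bsub>\<Gamma>\<^esub> U) \<and> card (rcosets\<^bsub>\<Gamma>\<^esub> U) \<le> n * ?d}"
  proof (clarify)
    fix N assume N: "N \<in> fin_index_normals (\<Gamma>\<lparr>carrier := pre S\<rparr>)" "index (\<Gamma>\<lparr>carrier := pre S\<rparr>) N \<le> n"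
    then have "subgroup N (\<Gamma>\<lparr>carrier := pre S\<rparr>)" "finite (rcosets\<^bsub>\<Gamma>\<lparr>carrier := pre S\<rparr>\<^esub> N)"
      by (auto simp: fin_index_normals_iff normal_imp_subgroup)
    note N' = subgroup_of_pre[OF assms this]
    have "card (rcosets\<^bsub>\<Gamma>\<^esub> N) \<le> n * ?d" using le_trans[OF N'(3) mult_right_mono[OF N(2), of ?d]] by simp
    then show "subgroup N \<Gamma> \<and> finite (rcosets\<^bsub>\<Gamma>\<^esub> N) \<and> card (rcosets\<^bsub>\<Gamma>\<^esub> N) \<le> n * ?d" using N'(1,2) by blast
  qed
  then show ?thesis using \<Gamma>.finite_subgroups_index_le[OF finitely_generated] finite_subset by blast
qed

lemma normal_Inter_index_le_pre:
  assumes "subgroup S G"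
  shows "Inter_index_le (\<Gamma>\<lparr>carrier := pre S\<rparr>) n \<lhd> \<Gamma>\<lparr>carrier := pre S\<rparr>"
    and "finite (rcosets\<^bsub>\<Gamma>\<lparr>carrier := pre S\<rparr>\<^esub> (Inter_index_le (\<Gamma>\<lparr>carrier := pre S\<rparr>) n))"
  using group.Inter_index_le_in_fin_index_normals[OF group_pre[OF assms] finite_normals_index_le_pre[OF assms]]
  by (auto simp: fin_index_normals_iff)

text \<open>The finite quotient realising a level: \<open>\<Gamma>\<close> modulo the normal core of the intersection of
  \<open>ker \<phi>\<close> with both subgroups \<open>Inter_index_le\<close>.\<close>
lemma quot_iso_rel_if_finite_quotients_iso:
  assumes G1: "subgroup G1 G" and G2: "subgroup G2 G"
    and iso: "\<And>(H :: nat monoid) \<psi> \<theta>. group H \<Longrightarrow> finite (carrier H) \<Longrightarrow> \<psi> \<in> hom \<Gamma> H \<Longrightarrow> \<theta> \<in> hom H G \<Longrightarrow>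
      (\<forall>x\<in>carrier \<Gamma>. \<phi> x = \<theta> (\<psi> x)) \<Longrightarrow>
      H\<lparr>carrier := {h \<in> carrier H. \<theta> h \<in> G1}\<rparr> \<cong> H\<lparr>carrier := {h \<in> carrier H. \<theta> h \<in> G2}\<rparr>"
  shows "\<exists>R. quot_iso_rel (\<Gamma>\<lparr>carrier := pre G1\<rparr>) (\<Gamma>\<lparr>carrier := pre G2\<rparr>)
    (Inter_index_le (\<Gamma>\<lparr>carrier := pre G1\<rparr>) n) (Inter_index_le (\<Gamma>\<lparr>carrier := pre G2\<rparr>) n) R"
proof -
  let ?K1 = "\<Gamma>\<lparr>carrier := pre G1\<rparr>" and ?K2 = "\<Gamma>\<lparr>carrier := pre G2\<rparr>"
  let ?U1 = "Inter_index_le ?K1 n" and ?U2 = "Inter_index_le ?K2 n"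
  have U1: "subgroup ?U1 \<Gamma>" "finite (rcosets\<^bsub>\<Gamma>\<^esub> ?U1)"
    using subgroup_of_pre[OF G1 normal_imp_subgroup normal_Inter_index_le_pre(2)[OF G1]]
      normal_Inter_index_le_pre(1)[OF G1] by blast+
  have U2: "subgroup ?U2 \<Gamma>" "finite (rcosets\<^bsub>\<Gamma>\<^esub> ?U2)"
    using subgroup_of_pre[OF G2 normal_imp_subgroup normal_Inter_index_le_pre(2)[OF G2]]
      normal_Inter_index_le_pre(1)[OF G2] by blast+
  have "kernel \<Gamma> G \<phi> = pre {\<one>\<^bsub>G\<^esub>}" unfolding kernel_def by auto
  then have ker: "subgroup (kernel \<Gamma> G \<phi>) \<Gamma>" "finite (rcosets\<^bsub>\<Gamma>\<^esub> (kernel \<Gamma> G \<phi>))"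
    using subgroup_pre[OF G.triv_subgroup] finite_rcosets_pre[OF G.triv_subgroup] by simp_all
  obtain C where C: "C \<lhd> \<Gamma>" "finite (rcosets\<^bsub>\<Gamma>\<^esub> C)" "C \<subseteq> \<Inter>{kernel \<Gamma> G \<phi>, ?U1, ?U2}"
    by (rule \<Gamma>.ex_normal_subset_Inter[of "{kernel \<Gamma> G \<phi>, ?U1, ?U2}"]) (use ker U1 U2 in auto)
  then have C_sub: "C \<subseteq> kernel \<Gamma> G \<phi>" "C \<subseteq> ?U1" "C \<subseteq> ?U2" by auto
  obtain H :: "nat monoid" and \<psi> \<theta> where H: "group H" "finite (carrier H)" "\<psi> \<in> hom \<Gamma> H" "\<theta> \<in> hom H G"
    "\<And>x. x \<in> carrier \<Gamma> \<Longrightarrow> \<theta> (\<psi> x) = \<phi> x" "\<psi> ` carrier \<Gamma> = carrier H" "kernel \<Gamma> H \<psi> = C"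
    by (rule \<Gamma>.finite_quotient_factorization[OF C(1,2) G.is_group hom C_sub(1)]) blast
  let ?T1 = "{h \<in> carrier H. \<theta> h \<in> G1}" and ?T2 = "{h \<in> carrier H. \<theta> h \<in> G2}"
  obtain f where "f \<in> iso (H\<lparr>carrier := ?T1\<rparr>) (H\<lparr>carrier := ?T2\<rparr>)"
    using iso[OF H(1-4)] H(5) unfolding is_iso_def by auto
  from quot_iso_rel_lift_iso[OF \<Gamma>.is_group H(1,3,6) preimage_subgroup[OF H(4,1) G.is_group G1]
      preimage_subgroup[OF H(4,1) G.is_group G2] this]
  obtain R where R: "quot_iso_rel ?K1 ?K2 C C R"
    using H(3,5,7) unfolding hom_def by (auto simp: Pi_iff cong: conj_cong)
  interpret R: quot_iso_rel ?K1 ?K2 C C R by (rule R)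
  have "a \<in> ?U1 \<longleftrightarrow> b \<in> ?U2" if "(a, b) \<in> R" for a b
    by (rule R.rel_Inter_index_le_iff[OF C_sub(2,3) that])
  then show ?thesis
    using R.quot_iso_rel_coarsen_rel normal_Inter_index_le_pre(1)[OF G1] normal_Inter_index_le_pre(1)[OF G2]
    by blast
qed

end

theorem corollary1p6:
  fixes \<Gamma> :: "('a, 'c) monoid_scheme" and G :: "('b, 'd) monoid_scheme"
    and \<phi> :: "'a \<Rightarrow> 'b" and G1 G2 :: "'b set"
  assumes "group \<Gamma>" and "finitely_generated_group \<Gamma>"
    and "group G" and "finite (carrier G)"
    and "subgroup G1 G" and "subgroup G2 G"
    and "\<phi> \<in> hom \<Gamma> G" and "\<phi> ` carrier \<Gamma> = carrier G"
    and "\<not> profinite_completions_iso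
             (\<Gamma>\<lparr>carrier := {x \<in> carrier \<Gamma>. \<phi> x \<in> G1}\<rparr>)
             (\<Gamma>\<lparr>carrier := {x \<in> carrier \<Gamma>. \<phi> x \<in> G2}\<rparr>)"
  shows "\<exists>(H :: nat monoid) \<psi> \<theta>. group H \<and> finite (carrier H) \<and>
           \<psi> \<in> hom \<Gamma> H \<and> \<theta> \<in> hom H G \<and>
           (\<forall>x \<in> carrier \<Gamma>. \<phi> x = \<theta> (\<psi> x)) \<and>
           \<not> (H\<lparr>carrier := {h \<in> carrier H. \<theta> h \<in> G1}\<rparr>
                 \<cong> H\<lparr>carrier := {h \<in> carrier H. \<theta> h \<in> G2}\<rparr>)"
proof (rule ccontr)
  assume "\<not> ?thesis"
  then have iso: "H\<lparr>carrier := {h \<in> carrier H. \<theta> h \<in> G1}\<rparr> \<cong> H\<lparr>carrier := {h \<in> carrier H. \<theta> h \<in> G2}\<rparr>"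
    if "group H" "finite (carrier H)" "\<psi> \<in> hom \<Gamma> H" "\<theta> \<in> hom H G" "\<forall>x\<in>carrier \<Gamma>. \<phi> x = \<theta> (\<psi> x)"
    for H :: "nat monoid" and \<psi> \<theta>
    using that by blast
  interpret fg_hom_to_finite \<Gamma> G \<phi>
    using assms(1-4,7) by (simp add: fg_hom_to_finite_def fg_hom_to_finite_axioms_def)
  have "profinite_completions_iso (\<Gamma>\<lparr>carrier := pre G1\<rparr>) (\<Gamma>\<lparr>carrier := pre G2\<rparr>)"
    by (rule profinite_completions_iso_if_quot_iso_rels[OF group_pre group_pre
          finite_normals_index_le_pre finite_normals_index_le_pre quot_iso_rel_if_finite_quotients_iso])
      (use assms(5,6) iso in auto)
  then show False using assms(9) by contradiction
qed

end
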